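(* Let $p$ be an odd prime, $\tilde\lambda$ a self-conjugate partition, $\varepsilon\in\{0,1\}$, and $m$ a residue modulo $p$ such that $m=0$ if $\varepsilon=0$. Then there exists a unique self-conjugate partition $\lambda$ such that (i) $a^*_\lambda\equiv\varepsilon \pmod 2$; (ii) $r^*_\lambda-\varepsilon^*_\lambda\equiv m\pmod p$; and (iii) $\lambda^{(1)*}=\tilde\lambda$. Moreover, if $\tilde\lambda$ is a BG-partition and, in case $\varepsilon=1$, $p\nmid 2m+1$, then $\lambda$ is a BG-partition.
   Context: Partitions: $\lambda=(\lambda_1\ge\lambda_2\ge\cdots)$ with finitely many nonzero parts; $l(\lambda)$ = number of nonzero parts; Young diagram $[\lambda]=\{(i,j): i\ge1, 1\le j\le\lambda_i\}$ ($i$ = row, increasing downward). $\lambda'$ is the conjugate; self-conjugate means $\lambda=\lambda'$. $k(\lambda)=\max\{i:\lambda_i\ge i\}$; hook length $h_{ij}=\lambda_i+\lambda'_j-i-j+1$. A BG-partition is a self-conjugate partition with $p\nmid h_{ii}$ for all $1\le i\le k(\lambda)$. Rim and $p$-rim: the rim is the set of nodes $(i,j)\in[\lambda]$ with $(i+1,j+1)\notin[\lambda]$. Label rim nodes $1,2,\dots$ along the rim path from $(1,\lambda_1)$ to $(l(\lambda),1)$. The first $p$-segment is the rim nodes labelled $1,\dots,p$ (or all if fewer). If the last node $(i,j)$ of a $p$-segment lies in the last row, stop; otherwise with $l$ the smallest label in row $i+1$ the next $p$-segment is the rim nodes labelled $l,\dots,l+p-1$ (or up to the last). The $p$-rim is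 the union of the $p$-segments. $p$-rim*: for nonempty self-conjugate $\lambda$, $U_\lambda=\{(i,j)\in p\text{-rim of }\lambda: i\le j\}$, $L_\lambda=\{(j,i):(i,j)\in U_\lambda\}$, $\mathrm{Rim}^*_p(\lambda)=U_\lambda\cup L_\lambda$, $a^*_\lambda=\#\mathrm{Rim}^*_p(\lambda)$, $r^*_\lambda=\#U_\lambda$, $\varepsilon^*_\lambda=a^*_\lambda\bmod 2$. $\lambda^{(1)*}$ denotes the (self-conjugate) partition whose diagram is $[\lambda]\setminus\mathrm{Rim}^*_p(\lambda)$. *)

theory Defs
  imports "HOL-Computational_Algebra.Primes" "HOL-Number_Theory.Cong"
begin

text \<open>A partition is represented by its Young diagram: a finite set of nodes (i,j),
  i = row (from 1, increasing downward), j = column (from 1).\<close>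

type_synonym diagram = "(nat \<times> nat) set"

definition young :: "diagram \<Rightarrow> bool" where
  "young D \<longleftrightarrow> finite D \<and> (\<forall>(i,j)\<in>D. 1 \<le> i \<and> 1 \<le> j) \<and>
     (\<forall>i j i' j'. (i,j) \<in> D \<and> 1 \<le> i' \<and> i' \<le> i \<and> 1 \<le> j' \<and> j' \<le> j \<longrightarrow> (i',j') \<in> D)"

definition row_len :: "diagram \<Rightarrow> nat \<Rightarrow> nat" where
  "row_len D i = card {j. (i,j) \<in> D}"

definition col_len :: "diagram \<Rightarrow> nat \<Rightarrow> nat" where
  "col_len D j = card {i. (i,j) \<in> D}"

definition num_rows :: "diagram \<Rightarrow> nat" where
  "num_rows D = card {i. \<exists>j. (i,j) \<in> D}"

definition conjugate :: "diagram \<Rightarrow> diagram" where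
  "conjugate D = {(j,i) | i j. (i,j) \<in> D}"

definition self_conjugate :: "diagram \<Rightarrow> bool" where
  "self_conjugate D \<longleftrightarrow> conjugate D = D"

definition kdiag :: "diagram \<Rightarrow> nat" where
  "kdiag D = Max ({0} \<union> {i. 1 \<le> i \<and> i \<le> row_len D i})"

definition hook :: "diagram \<Rightarrow> nat \<Rightarrow> nat \<Rightarrow> int" where
  "hook D i j = int (row_len D i) + int (col_len D j) - int i - int j + 1"

definition BG_partition :: "nat \<Rightarrow> diagram \<Rightarrow> bool" where
  "BG_partition p D \<longleftrightarrow> self_conjugate D \<and>
     (\<forall>i. 1 \<le> i \<and> i \<le> kdiag D \<longrightarrow> \<not> int p dvd hook D i i)"

definition rim :: "diagram \<Rightarrow> diagram" where
  "rim D = {(i,j). (i,j) \<in> D \<and> (i+1, j+1) \<notin> D}"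

text \<open>Label of a rim node along the rim path from (1,lambda_1) to (l,1):
  the path runs through the rows top to bottom and, within a row, right to left.\<close>
definition rim_label :: "diagram \<Rightarrow> nat \<times> nat \<Rightarrow> nat" where
  "rim_label D x = card {y \<in> rim D. fst y < fst x \<or> (fst y = fst x \<and> snd y > snd x)} + 1"

definition pseg :: "diagram \<Rightarrow> nat \<Rightarrow> nat \<Rightarrow> diagram" where
  "pseg D p s = {x \<in> rim D. s \<le> rim_label D x \<and> rim_label D x \<le> s + p - 1}"

inductive pseg_start :: "diagram \<Rightarrow> nat \<Rightarrow> nat \<Rightarrow> bool" for D p where
  first: "pseg_start D p 1"
| step: "\<lbrakk> pseg_start D p s; x \<in> pseg D p s; \<forall>y\<in>pseg D p s. rim_label D y \<le> rim_label D x;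
           fst x \<noteq> num_rows D \<rbrakk>
         \<Longrightarrow> pseg_start D p (Min (rim_label D ` {y \<in> rim D. fst y = fst x + 1}))"

definition prim :: "diagram \<Rightarrow> nat \<Rightarrow> diagram" where
  "prim D p = \<Union> {pseg D p s | s. pseg_start D p s}"

definition U_star :: "diagram \<Rightarrow> nat \<Rightarrow> diagram" where
  "U_star D p = {(i,j). (i,j) \<in> prim D p \<and> i \<le> j}"

definition rim_star :: "diagram \<Rightarrow> nat \<Rightarrow> diagram" where
  "rim_star D p = U_star D p \<union> {(j,i) | i j. (i,j) \<in> U_star D p}"

definition a_star :: "diagram \<Rightarrow> nat \<Rightarrow> nat" where
  "a_star D p = card (rim_star D p)"

definition r_star :: "diagram \<Rightarrow> nat \<Rightarrow> nat" where
  "r_star D p = card (U_star D p)"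

definition eps_star :: "diagram \<Rightarrow> nat \<Rightarrow> nat" where
  "eps_star D p = a_star D p mod 2"

definition lam1_star :: "diagram \<Rightarrow> nat \<Rightarrow> diagram" where
  "lam1_star D p = D - rim_star D p"

end

theory Submission
  imports Defs
begin

text \<open>A self-conjugate partition \<open>\<lambda>\<close> is determined by the set \<open>M\<close> of its half diagonal hooks
  \<open>y = (h\<^sub>i\<^sub>i + 1) div 2\<close>.  The \<open>p\<close>-segments of the upper half of its \<open>p\<close>-rim start in the rows of a
  chain \<open>X\<^sub>0 > X\<^sub>1 > ...\<close> in \<open>M\<close>, where \<open>X\<^sub>0 = Max M\<close> and \<open>X\<^sub>k\<^sub>+\<^sub>1\<close> is the largest element of \<open>M\<close>
  that is at most \<open>X\<^sub>k - p\<close>, and they cover the contents in the windows \<open>[X\<^sub>k - p, X\<^sub>k)\<close>.  Hence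
  removing \<open>Rim*\<^sub>p\<close> replaces each \<open>X\<^sub>k\<close> by \<open>X\<^sub>k - p\<close> (dropping it when \<open>X\<^sub>k \<le> p\<close>), \<open>\<epsilon>*\<close> says
  whether the lowest chain element \<open>x\<close> is at most \<open>p\<close>, and \<open>r* - \<epsilon>* \<equiv> x - 1\<close> or \<open>r* \<equiv> 0 (mod p)\<close>
  accordingly.  Conversely, the chain is rebuilt upwards from \<open>x\<close> and the half hooks of
  \<open>\<lambda>^(1)*\<close>, so conditions (i)--(iii) leave exactly one choice: \<open>x = m + 1\<close> if \<open>\<epsilon> = 1\<close>, and \<open>x\<close>
  equal to \<open>p\<close> plus the least half hook of \<open>T\<close> if \<open>\<epsilon> = 0\<close> (and \<open>\<lambda> = \<emptyset>\<close> if moreover \<open>T = \<emptyset>\<close>).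
  Passing from \<open>T\<close> to \<open>\<lambda>\<close> changes half hooks by \<open>0\<close> or \<open>p\<close>, except for a new bottom \<open>x \<le> p\<close>,
  whose diagonal hook \<open>2 x - 1 \<equiv> 2 m + 1\<close> is prime to \<open>p\<close> by hypothesis.\<close>

section \<open>Orbits of maps on linear orders\<close>

lemma funpow_decreasing_antimono:
  fixes g :: "'a::order \<Rightarrow> 'a"
  assumes "\<And>x. g x \<le> x" "i \<le> j"
  shows "(g ^^ j) a \<le> (g ^^ i) a"
  using assms(2)
proof (induction j rule: dec_induct)
  case (step n)
  then show ?case using assms(1)[of "(g ^^ n) a"] by simp
qed simp

lemma funpow_increasing_mono:
  fixes g :: "'a::order \<Rightarrow> 'a"
  assumes "\<And>x. x \<le> g x" "i \<le> j"
  shows "(g ^^ i) a \<le> (g ^^ j) a"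
  using assms(2)
proof (induction j rule: dec_induct)
  case (step n)
  then show ?case using assms(1)[of "(g ^^ n) a"] by simp
qed simp

lemma funpow_fixpoint_stable:
  assumes "g ((g ^^ j) a) = (g ^^ j) a" "j \<le> i"
  shows "(g ^^ i) a = (g ^^ j) a"
  using assms(2) by (induction i rule: dec_induct) (use assms(1) in simp_all)

lemma decreasing_orbit_le_step:
  fixes g :: "'a::linorder \<Rightarrow> 'a"
  assumes "\<And>x. g x \<le> x" "x \<in> range (\<lambda>j. (g ^^ j) a)" "z \<in> range (\<lambda>j. (g ^^ j) a)" "z < x"
  shows "z \<le> g x"
proof -
  obtain i j where ij: "z = (g ^^ i) a" "x = (g ^^ j) a" using assms(2,3) by blast
  have "Suc j \<le> i" using funpow_decreasing_antimono[OF assms(1), of i j a] ij assms(4) by fastforce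
  then show ?thesis using funpow_decreasing_antimono[OF assms(1), of "Suc j" i a] ij by simp
qed

lemma decreasing_orbit_fixpoint_le:
  fixes g :: "'a::linorder \<Rightarrow> 'a"
  assumes "\<And>x. g x \<le> x" "x \<in> range (\<lambda>j. (g ^^ j) a)" "g x = x" "z \<in> range (\<lambda>j. (g ^^ j) a)"
  shows "x \<le> z"
proof -
  obtain i j where ij: "z = (g ^^ i) a" "x = (g ^^ j) a" using assms(2,4) by blast
  show ?thesis
  proof (cases "i \<le> j")
    case True then show ?thesis using funpow_decreasing_antimono[OF assms(1) True] ij by simp
  next
    case False then show ?thesis using funpow_fixpoint_stable[of g j a i] assms(3) ij by simp
  qed
qed

lemma increasing_orbit_step_le:
  fixes g :: "'a::linorder \<Rightarrow> 'a"
  assumes "\<And>x. x \<le> g x" "x \<in> range (\<lambda>j. (g ^^ j) a)" "z \<in> range (\<lambda>j. (g ^^ j) a)" "x < z"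
  shows "g x \<le> z"
proof -
  obtain i j where ij: "z = (g ^^ i) a" "x = (g ^^ j) a" using assms(2,3) by blast
  have "Suc j \<le> i" using funpow_increasing_mono[OF assms(1), of i j a] ij assms(4) by fastforce
  then show ?thesis using funpow_increasing_mono[OF assms(1), of "Suc j" i a] ij by simp
qed

lemma increasing_orbit_fixpoint_ge:
  fixes g :: "'a::linorder \<Rightarrow> 'a"
  assumes "\<And>x. x \<le> g x" "x \<in> range (\<lambda>j. (g ^^ j) a)" "g x = x" "z \<in> range (\<lambda>j. (g ^^ j) a)"
  shows "z \<le> x"
proof -
  obtain i j where ij: "z = (g ^^ i) a" "x = (g ^^ j) a" using assms(2,4) by blast
  show ?thesis
  proof (cases "i \<le> j")
    case True then show ?thesis using funpow_increasing_mono[OF assms(1) True] ij by simp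
  next
    case False then show ?thesis using funpow_fixpoint_stable[of g j a i] assms(3) ij by simp
  qed
qed

lemma funpow_in_closed:
  assumes "a \<in> S" "\<And>x. x \<in> S \<Longrightarrow> g x \<in> S"
  shows "(g ^^ j) a \<in> S"
  by (induction j) (simp_all add: assms)

lemma Max_below_successor:
  fixes S :: "'a::linorder set"
  assumes "finite S" "x \<in> S" "x < w" "\<And>z. z \<in> S \<Longrightarrow> x < z \<Longrightarrow> w \<le> z"
  shows "Max {z\<in>S. z < w} = x"
proof (rule Max_eqI)
  show "finite {z\<in>S. z < w}" "x \<in> {z\<in>S. z < w}" using assms(1-3) by simp_all
  show "y \<le> x" if "y \<in> {z\<in>S. z < w}" for y using that assms(4)[of y] by (auto simp: not_le[symmetric])
qed

lemma Min_above_predecessor: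
  fixes S :: "'a::linorder set"
  assumes "finite S" "x \<in> S" "w < x" "\<And>z. z \<in> S \<Longrightarrow> z < x \<Longrightarrow> z \<le> w"
  shows "Min {z\<in>S. w < z} = x"
proof (rule Min_eqI)
  show "finite {z\<in>S. w < z}" "x \<in> {z\<in>S. w < z}" using assms(1-3) by simp_all
  show "x \<le> y" if "y \<in> {z\<in>S. w < z}" for y using that assms(4)[of y] by (auto simp: not_le[symmetric])
qed

lemma range_funpow_from_Max:
  fixes S :: "'a::linorder set"
  assumes "finite S" "S \<noteq> {}"
    and pred: "\<And>x. x \<in> S \<Longrightarrow> \<exists>z\<in>S. z < x \<Longrightarrow> g x = Max {z\<in>S. z < x}"
    and bot: "\<And>x. x \<in> S \<Longrightarrow> \<not> (\<exists>z\<in>S. z < x) \<Longrightarrow> g x = x"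
  shows "range (\<lambda>j. (g ^^ j) (Max S)) = S"
proof (intro equalityI subsetI)
  have "g x \<in> S" if "x \<in> S" for x
  proof (cases "\<exists>z\<in>S. z < x")
    case True
    then have "Max {z\<in>S. z < x} \<in> {z\<in>S. z < x}" using assms(1) by (intro Max_in) auto
    then show ?thesis using pred[OF that True] by simp
  qed (use bot that in simp)
  then show "y \<in> S" if "y \<in> range (\<lambda>j. (g ^^ j) (Max S))" for y
    using that funpow_in_closed[of "Max S" S g] assms(1,2) by auto
next
  fix x assume "x \<in> S"
  then show "x \<in> range (\<lambda>j. (g ^^ j) (Max S))"
  proof (induction "card {z\<in>S. x < z}" arbitrary: x rule: less_induct)
    case less
    show ?case
    proof (cases "\<exists>z\<in>S. x < z")
      case False
      then have "x = Max S" using less.prems assms(1) by (intro antisym Max_ge Max.boundedI) auto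
      then have "x = (g ^^ 0) (Max S)" by simp
      then show ?thesis by blast
    next
      case True
      define w where "w = Min {z\<in>S. x < z}"
      have "w \<in> {z\<in>S. x < z}" unfolding w_def using assms(1) True by (intro Min_in) auto
      then have w: "w \<in> S" "x < w" by auto
      have "card {z\<in>S. w < z} < card {z\<in>S. x < z}" using w assms(1) by (intro psubset_card_mono) auto
      then obtain j where j: "w = (g ^^ j) (Max S)" using less.hyps w(1) by blast
      have "Max {z\<in>S. z < w} = x"
        using Max_below_successor[OF assms(1) less.prems w(2)] assms(1) unfolding w_def by simp
      then have "g w = x" using pred[OF w(1)] less.prems w(2) by blast
      then have "x = (g ^^ Suc j) (Max S)" using j by simp
      then show ?thesis by blast
    qed
  qed
qed

lemma range_funpow_from_Min:
  fixes S :: "'a::linorder set"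
  assumes "finite S" "S \<noteq> {}"
    and succ: "\<And>x. x \<in> S \<Longrightarrow> \<exists>z\<in>S. x < z \<Longrightarrow> g x = Min {z\<in>S. x < z}"
    and top: "\<And>x. x \<in> S \<Longrightarrow> \<not> (\<exists>z\<in>S. x < z) \<Longrightarrow> g x = x"
  shows "range (\<lambda>j. (g ^^ j) (Min S)) = S"
proof (intro equalityI subsetI)
  have "g x \<in> S" if "x \<in> S" for x
  proof (cases "\<exists>z\<in>S. x < z")
    case True
    then have "Min {z\<in>S. x < z} \<in> {z\<in>S. x < z}" using assms(1) by (intro Min_in) auto
    then show ?thesis using succ[OF that True] by simp
  qed (use top that in simp)
  then show "y \<in> S" if "y \<in> range (\<lambda>j. (g ^^ j) (Min S))" for y
    using that funpow_in_closed[of "Min S" S g] assms(1,2) by auto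
next
  fix x assume "x \<in> S"
  then show "x \<in> range (\<lambda>j. (g ^^ j) (Min S))"
  proof (induction "card {z\<in>S. z < x}" arbitrary: x rule: less_induct)
    case less
    show ?case
    proof (cases "\<exists>z\<in>S. z < x")
      case False
      then have "x = Min S" using less.prems assms(1) by (intro antisym Min_le Min.boundedI) auto
      then have "x = (g ^^ 0) (Min S)" by simp
      then show ?thesis by blast
    next
      case True
      define w where "w = Max {z\<in>S. z < x}"
      have "w \<in> {z\<in>S. z < x}" unfolding w_def using assms(1) True by (intro Max_in) auto
      then have w: "w \<in> S" "w < x" by auto
      have "card {z\<in>S. z < w} < card {z\<in>S. z < x}" using w assms(1) by (intro psubset_card_mono) auto
      then obtain j where j: "w = (g ^^ j) (Min S)" using less.hyps w(1) by blast
      have "Min {z\<in>S. w < z} = x"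
        using Min_above_predecessor[OF assms(1) less.prems w(2)] assms(1) unfolding w_def by simp
      then have "g w = x" using succ[OF w(1)] less.prems w(2) by blast
      then have "x = (g ^^ Suc j) (Min S)" using j by simp
      then show ?thesis by blast
    qed
  qed
qed
section \<open>Chains in finite sets of positive integers\<close>

text \<open>For the set \<open>M\<close> of half hooks of \<open>\<lambda>\<close> (see \<open>sc_diagram\<close>), \<open>p_chain p M\<close> is the chain
  \<open>X\<^sub>0 > X\<^sub>1 > ...\<close> of rows in which the \<open>p\<close>-segments of the upper half of the \<open>p\<close>-rim start,
  \<open>shift_chain p M\<close> is the set of half hooks of \<open>\<lambda>^(1)*\<close>, and \<open>chain_cover p M\<close> is the set of
  contents of the nodes in \<open>U\<^sub>\<lambda>\<close>.\<close>

definition has_below :: "nat \<Rightarrow> nat set \<Rightarrow> nat \<Rightarrow> bool" where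
  "has_below p M X \<longleftrightarrow> (\<exists>Y\<in>M. Y + p \<le> X)"

definition next_below :: "nat \<Rightarrow> nat set \<Rightarrow> nat \<Rightarrow> nat" where
  "next_below p M X = (if has_below p M X then Max {Y\<in>M. Y + p \<le> X} else X)"

definition p_chain :: "nat \<Rightarrow> nat set \<Rightarrow> nat set" where
  "p_chain p M = (if M = {} then {} else range (\<lambda>j. (next_below p M ^^ j) (Max M)))"

definition shift_down :: "nat \<Rightarrow> nat set \<Rightarrow> nat set" where
  "shift_down p C = (\<lambda>X. X - p) ` {X\<in>C. p < X}"

definition shift_chain :: "nat \<Rightarrow> nat set \<Rightarrow> nat set" where
  "shift_chain p M = (M - p_chain p M) \<union> shift_down p (p_chain p M)"

definition chain_cover :: "nat \<Rightarrow> nat set \<Rightarrow> nat set" where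
  "chain_cover p M = {c. \<exists>X\<in>p_chain p M. c < X \<and> X \<le> c + p}"

lemma next_below_props:
  assumes "finite M" "has_below p M X"
  shows next_below_in: "next_below p M X \<in> M"
    and next_below_add_le: "next_below p M X + p \<le> X"
    and le_next_below: "Y \<in> M \<Longrightarrow> Y + p \<le> X \<Longrightarrow> Y \<le> next_below p M X"
proof -
  have "{Y\<in>M. Y + p \<le> X} \<noteq> {}" using assms(2) unfolding has_below_def by auto
  then have "Max {Y\<in>M. Y + p \<le> X} \<in> {Y\<in>M. Y + p \<le> X}" using assms(1) by (intro Max_in) auto
  then show "next_below p M X \<in> M" "next_below p M X + p \<le> X"
    using assms(2) unfolding next_below_def by auto
  show "Y \<in> M \<Longrightarrow> Y + p \<le> X \<Longrightarrow> Y \<le> next_below p M X"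
    using assms unfolding next_below_def by simp
qed

lemma next_below_le: "finite M \<Longrightarrow> next_below p M X \<le> X"
  using next_below_add_le[of M p X] by (auto simp: next_below_def)

lemma has_below_gt:
  assumes "0 \<notin> M" "has_below p M X"
  shows "p < X"
proof -
  obtain Y where "Y \<in> M" "Y + p \<le> X" using assms(2) unfolding has_below_def by blast
  moreover have "Y \<noteq> 0" using assms(1) \<open>Y \<in> M\<close> by metis
  ultimately show ?thesis by linarith
qed

lemma next_below_closed: "finite M \<Longrightarrow> X \<in> M \<Longrightarrow> next_below p M X \<in> M"
  using next_below_in[of M p X] by (auto simp: next_below_def)

lemma p_chain_subset: "finite M \<Longrightarrow> p_chain p M \<subseteq> M"
proof -
  assume fin: "finite M"
  have "(next_below p M ^^ j) (Max M) \<in> M" if "M \<noteq> {}" for j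
    by (induction j) (simp_all add: fin that next_below_closed)
  then show ?thesis unfolding p_chain_def by auto
qed

lemma finite_p_chain: "finite M \<Longrightarrow> finite (p_chain p M)"
  using p_chain_subset by (rule finite_subset)

lemma Max_in_p_chain: "M \<noteq> {} \<Longrightarrow> Max M \<in> p_chain p M"
  unfolding p_chain_def by (auto intro!: range_eqI[where x = 0])

lemma p_chain_le_Max: "finite M \<Longrightarrow> X \<in> p_chain p M \<Longrightarrow> X \<le> Max M"
  using p_chain_subset[of M p] by (intro Max_ge) auto

lemma p_chain_empty_iff: "p_chain p M = {} \<longleftrightarrow> M = {}"
  using Max_in_p_chain unfolding p_chain_def by auto

lemma next_below_in_p_chain:
  assumes "X \<in> p_chain p M"
  shows "next_below p M X \<in> p_chain p M"
proof -
  obtain j where "M \<noteq> {}" "X = (next_below p M ^^ j) (Max M)"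
    using assms unfolding p_chain_def by (auto split: if_splits)
  moreover have "(next_below p M ^^ Suc j) (Max M) \<in> range (\<lambda>j. (next_below p M ^^ j) (Max M))"
    by (rule rangeI)
  ultimately show ?thesis unfolding p_chain_def using \<open>M \<noteq> {}\<close> by simp
qed

lemma p_chain_le_next_below:
  assumes "finite M" "X \<in> p_chain p M" "Z \<in> p_chain p M" "Z < X"
  shows "Z \<le> next_below p M X"
  using decreasing_orbit_le_step[of "next_below p M"] next_below_le[OF assms(1)] assms(2-4)
  unfolding p_chain_def by (auto split: if_splits)

lemma p_chain_gap:
  assumes "finite M" "X \<in> p_chain p M" "X' \<in> p_chain p M" "X' < X"
  shows "has_below p M X" "X' + p \<le> X"
proof -
  show hb: "has_below p M X"
  proof (rule ccontr)
    assume "\<not> has_below p M X"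
    then have "next_below p M X = X" unfolding next_below_def by simp
    then have "X \<le> X'"
      using decreasing_orbit_fixpoint_le[of "next_below p M"] next_below_le[OF assms(1)] assms(2,3)
      unfolding p_chain_def by (auto split: if_splits)
    then show False using assms(4) by simp
  qed
  show "X' + p \<le> X"
    using p_chain_le_next_below[OF assms] next_below_add_le[OF assms(1) hb] by simp
qed

lemma Min_p_chain_no_below:
  assumes "finite M" "M \<noteq> {}" "0 < p"
  shows "\<not> has_below p M (Min (p_chain p M))"
proof
  let ?m = "Min (p_chain p M)"
  assume hb: "has_below p M ?m"
  have "?m \<in> p_chain p M" using assms finite_p_chain p_chain_empty_iff by (intro Min_in) auto
  then have "?m \<le> next_below p M ?m" using assms(1) finite_p_chain next_below_in_p_chain by simp
  then show False using next_below_add_le[OF assms(1) hb] assms(3) by simp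
qed

lemma p_less_nonmin_p_chain:
  assumes "finite M" "0 \<notin> M" "X \<in> p_chain p M" "X \<noteq> Min (p_chain p M)"
  shows "p < X"
proof -
  have "Min (p_chain p M) \<le> X" using assms finite_p_chain by (intro Min_le) auto
  then have "Min (p_chain p M) < X" using assms(4) by simp
  moreover have "Min (p_chain p M) \<in> p_chain p M" using assms finite_p_chain by (intro Min_in) auto
  ultimately show ?thesis using p_chain_gap(1)[OF assms(1,3)] has_below_gt[OF assms(2)] by blast
qed

lemma diff_in_p_chain:
  assumes "finite M" "X \<in> p_chain p M" "p < X" "X - p \<in> M"
  shows "X - p \<in> p_chain p M"
proof -
  have hb: "has_below p M X" using assms(3,4) unfolding has_below_def by (intro bexI[of _ "X - p"]) auto
  have "next_below p M X = X - p"
    using next_below_add_le[OF assms(1) hb] le_next_below[OF assms(1) hb assms(4)] assms(3) by simp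
  then show ?thesis using next_below_in_p_chain[OF assms(2)] by simp
qed

lemma p_chain_unique_in_window:
  assumes "finite M" "X \<in> p_chain p M" "X' \<in> p_chain p M" "c < X" "X \<le> c + p" "c < X'" "X' \<le> c + p"
  shows "X = X'"
proof (cases X X' rule: linorder_cases)
  case less
  then show ?thesis using p_chain_gap(2)[OF assms(1,3,2) less] assms(4-7) by linarith
next
  case greater
  then show ?thesis using p_chain_gap(2)[OF assms(1,2,3) greater] assms(4-7) by linarith
qed

lemma finite_chain_cover: "finite M \<Longrightarrow> finite (chain_cover p M)"
proof -
  assume "finite M"
  then have "chain_cover p M \<subseteq> {..Max M}"
    unfolding chain_cover_def using p_chain_le_Max by fastforce
  then show ?thesis using finite_subset by blast
qed

lemma zero_in_chain_cover_iff:
  assumes "finite M" "0 \<notin> M"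
  shows "0 \<in> chain_cover p M \<longleftrightarrow> M \<noteq> {} \<and> Min (p_chain p M) \<le> p"
proof
  assume "0 \<in> chain_cover p M"
  then obtain X where X: "X \<in> p_chain p M" "X \<le> p" unfolding chain_cover_def by auto
  then have "M \<noteq> {}" using p_chain_empty_iff by blast
  moreover have "Min (p_chain p M) \<le> X" using X finite_p_chain[OF assms(1)] by simp
  ultimately show "M \<noteq> {} \<and> Min (p_chain p M) \<le> p" using X by simp
next
  assume h: "M \<noteq> {} \<and> Min (p_chain p M) \<le> p"
  then have "Min (p_chain p M) \<in> p_chain p M"
    using finite_p_chain[OF assms(1)] p_chain_empty_iff by (intro Min_in) auto
  moreover from this have "0 < Min (p_chain p M)"
    using p_chain_subset[OF assms(1)] assms(2) by (metis gr0I subsetD)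
  ultimately show "0 \<in> chain_cover p M" unfolding chain_cover_def using h by auto
qed

text \<open>The cover is the disjoint union of the windows \<open>[X - p, X)\<close>, all of length \<open>p\<close>
  except possibly the lowest one.\<close>

lemma card_chain_cover:
  assumes "finite M" "M \<noteq> {}" "0 \<notin> M"
  shows "card (chain_cover p M) = p * (card (p_chain p M) - 1) + min (Min (p_chain p M)) p"
proof -
  let ?C = "p_chain p M" and ?m = "Min (p_chain p M)"
  define I where "I X = {X - p..<X}" for X :: nat
  have finC: "finite ?C" using finite_p_chain[OF assms(1)] .
  have m: "?m \<in> ?C" using finC assms(2) p_chain_empty_iff by (intro Min_in) auto
  have cover: "chain_cover p M = (\<Union>X\<in>?C. I X)" unfolding chain_cover_def I_def by (auto simp: le_diff_conv)
  have disj: "I X \<inter> I X' = {}" if "X \<in> ?C" "X' \<in> ?C" "X \<noteq> X'" for X X'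
    using p_chain_gap(2)[OF assms(1)] that unfolding I_def by (cases X X' rule: linorder_cases) force+
  have "card (chain_cover p M) = (\<Sum>X\<in>?C. card (I X))"
    unfolding cover using finC disj by (intro card_UN_disjoint) (auto simp: I_def)
  also have "\<dots> = (\<Sum>X\<in>?C. min X p)" unfolding I_def by (intro sum.cong) auto
  also have "\<dots> = min ?m p + (\<Sum>X\<in>?C - {?m}. min X p)" using sum.remove[OF finC m] by simp
  also have "(\<Sum>X\<in>?C - {?m}. min X p) = (\<Sum>X\<in>?C - {?m}. p)"
    using p_less_nonmin_p_chain[OF assms(1,3)] by (intro sum.cong) auto
  also have "\<dots> = p * (card ?C - 1)" using m finC by simp
  finally show ?thesis by simp
qed

lemma finite_shift_chain: "finite M \<Longrightarrow> finite (shift_chain p M)"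
  unfolding shift_chain_def shift_down_def using finite_p_chain by auto

lemma zero_notin_shift_chain: "0 \<notin> M \<Longrightarrow> 0 \<notin> shift_chain p M"
  unfolding shift_chain_def shift_down_def by auto

lemma shift_chain_empty: "shift_chain p {} = {}" and chain_cover_empty: "chain_cover p {} = {}"
  unfolding shift_chain_def shift_down_def chain_cover_def p_chain_def by auto

lemma shift_chain_less_Max:
  assumes "finite M" "0 < p" "y \<in> shift_chain p M"
  shows "y < Max M"
proof -
  consider "y \<in> M" "y \<notin> p_chain p M" | Z where "y = Z - p" "Z \<in> p_chain p M" "p < Z"
    using assms(3) unfolding shift_chain_def shift_down_def by blast
  then show ?thesis
  proof cases
    case 1
    then have "y \<noteq> Max M" using Max_in_p_chain by blast
    then show ?thesis using 1 assms(1) by (simp add: order_le_neq_trans)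
  next
    case 2
    then show ?thesis using p_chain_le_Max[OF assms(1)] assms(2) by fastforce
  qed
qed

lemma shift_chain_recover:
  assumes "finite M"
  shows "M = (shift_chain p M - shift_down p (p_chain p M)) \<union> p_chain p M"
  using diff_in_p_chain[OF assms] p_chain_subset[OF assms]
  unfolding shift_chain_def shift_down_def by auto

lemma Min_shift_chain:
  assumes "finite M" "M \<noteq> {}" "0 < p" "p < Min (p_chain p M)"
  shows "Min (shift_chain p M) = Min (p_chain p M) - p"
proof -
  let ?m = "Min (p_chain p M)"
  have m: "?m \<in> p_chain p M" using finite_p_chain[OF assms(1)] assms(2) p_chain_empty_iff by (intro Min_in) auto
  have in_shift: "?m - p \<in> shift_chain p M"
    unfolding shift_chain_def shift_down_def using m assms(4) by blast
  have "?m - p \<le> y" if y: "y \<in> shift_chain p M" for y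
  proof -
    consider "y \<in> M" | Z where "y = Z - p" "Z \<in> p_chain p M"
      using y unfolding shift_chain_def shift_down_def by blast
    then show ?thesis
    proof cases
      case 1
      then show ?thesis using Min_p_chain_no_below[OF assms(1-3)] unfolding has_below_def by force
    next
      case 2
      then have "?m \<le> Z" using finite_p_chain[OF assms(1)] by simp
      then show ?thesis using 2 by simp
    qed
  qed
  then show ?thesis using in_shift finite_shift_chain[OF assms(1)] by (intro antisym Min_le Min.boundedI) auto
qed

text \<open>Conversely, the chain is rebuilt upwards from its lowest element \<open>x0\<close> and the shifted set
  \<open>N = shift_chain p M\<close>: the successor of a chain element \<open>x\<close> is \<open>p\<close> above the least element of \<open>N\<close>
  not below \<open>x\<close>.\<close>

definition has_above :: "nat set \<Rightarrow> nat \<Rightarrow> bool" where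
  "has_above N X \<longleftrightarrow> (\<exists>y\<in>N. X \<le> y)"

definition next_above :: "nat \<Rightarrow> nat set \<Rightarrow> nat \<Rightarrow> nat" where
  "next_above p N X = (if has_above N X then Min {y\<in>N. X \<le> y} + p else X)"

definition lifted_chain :: "nat \<Rightarrow> nat set \<Rightarrow> nat \<Rightarrow> nat set" where
  "lifted_chain p N x0 = range (\<lambda>j. (next_above p N ^^ j) x0)"

definition unshift_chain :: "nat \<Rightarrow> nat set \<Rightarrow> nat \<Rightarrow> nat set" where
  "unshift_chain p N x0 = (N - shift_down p (lifted_chain p N x0)) \<union> lifted_chain p N x0"

lemma next_above_props:
  assumes "finite N" "has_above N X"
  shows next_above_eq: "next_above p N X = Min {y\<in>N. X \<le> y} + p"
    and next_above_diff_in: "next_above p N X - p \<in> N"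
    and add_le_next_above: "X + p \<le> next_above p N X"
    and next_above_diff_le: "y \<in> N \<Longrightarrow> X \<le> y \<Longrightarrow> next_above p N X - p \<le> y"
proof -
  have "{y\<in>N. X \<le> y} \<noteq> {}" using assms(2) unfolding has_above_def by auto
  then have "Min {y\<in>N. X \<le> y} \<in> {y\<in>N. X \<le> y}" using assms(1) by (intro Min_in) auto
  moreover show e: "next_above p N X = Min {y\<in>N. X \<le> y} + p"
    using assms(2) unfolding next_above_def by simp
  ultimately show "next_above p N X - p \<in> N" "X + p \<le> next_above p N X" by auto
  show "y \<in> N \<Longrightarrow> X \<le> y \<Longrightarrow> next_above p N X - p \<le> y" using e assms(1) by simp
qed

lemma next_above_ge: "finite N \<Longrightarrow> X \<le> next_above p N X"
  using add_le_next_above[of N X p] by (auto simp: next_above_def)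

lemma next_above_bound:
  assumes "finite N"
  shows "next_above p N X \<le> max X (Max N + p)"
proof (cases "has_above N X")
  case True
  have "next_above p N X - p \<le> Max N" using next_above_diff_in[OF assms True] assms by simp
  then show ?thesis using add_le_next_above[OF assms True, of p] by simp
qed (simp add: next_above_def)

lemma finite_lifted_chain: "finite N \<Longrightarrow> finite (lifted_chain p N x0)"
proof -
  assume fin: "finite N"
  have "(next_above p N ^^ j) x0 \<le> max x0 (Max N + p)" for j
  proof (induction j)
    case (Suc j)
    then show ?case using next_above_bound[OF fin, of p "(next_above p N ^^ j) x0"] by simp
  qed simp
  then have "lifted_chain p N x0 \<subseteq> {..max x0 (Max N + p)}" unfolding lifted_chain_def by auto
  then show ?thesis using finite_subset by blast
qed

lemma start_in_lifted_chain: "x0 \<in> lifted_chain p N x0"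
  unfolding lifted_chain_def by (auto intro!: range_eqI[where x = 0])

lemma lifted_chain_ge_start:
  assumes "finite N" "z \<in> lifted_chain p N x0"
  shows "x0 \<le> z"
proof -
  obtain j where "z = (next_above p N ^^ j) x0" using assms(2) unfolding lifted_chain_def by blast
  then show ?thesis
    using funpow_increasing_mono[of "next_above p N" 0 j x0] next_above_ge[OF assms(1)] by simp
qed

lemma next_above_in_lifted_chain: "x \<in> lifted_chain p N x0 \<Longrightarrow> next_above p N x \<in> lifted_chain p N x0"
proof -
  assume "x \<in> lifted_chain p N x0"
  then obtain j where "x = (next_above p N ^^ j) x0" unfolding lifted_chain_def by blast
  moreover have "(next_above p N ^^ Suc j) x0 \<in> range (\<lambda>j. (next_above p N ^^ j) x0)" by (rule rangeI)
  ultimately show ?thesis unfolding lifted_chain_def by simp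
qed

lemma Max_lifted_chain_no_above:
  assumes "finite N" "0 < p"
  shows "\<not> has_above N (Max (lifted_chain p N x0))"
proof
  let ?R = "lifted_chain p N x0"
  assume h: "has_above N (Max ?R)"
  have "Max ?R \<in> ?R" using finite_lifted_chain[OF assms(1)] start_in_lifted_chain[of x0 p N]
    by (intro Max_in) auto
  then have "next_above p N (Max ?R) \<le> Max ?R"
    using next_above_in_lifted_chain finite_lifted_chain[OF assms(1)] by simp
  then show False using add_le_next_above[OF assms(1) h, of p] assms(2) by simp
qed

lemma lifted_chain_predecessor:
  assumes "finite N" "0 < p" "x \<in> lifted_chain p N x0" "x \<noteq> x0"
  defines "w \<equiv> Max {z \<in> lifted_chain p N x0. z < x}"
  shows "w \<in> lifted_chain p N x0" "w < x" "has_above N w" "next_above p N w = x"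
proof -
  let ?R = "lifted_chain p N x0" and ?g = "next_above p N"
  have "x0 < x" using lifted_chain_ge_start[OF assms(1,3)] assms(4) by simp
  then have "w \<in> {z\<in>?R. z < x}"
    unfolding w_def using finite_lifted_chain[OF assms(1)] start_in_lifted_chain[of x0 p N]
    by (intro Max_in) auto
  then show w: "w \<in> ?R" "w < x" by auto
  have inc: "\<And>y. y \<le> ?g y" using next_above_ge[OF assms(1)] .
  have wR: "w \<in> range (\<lambda>j. (?g ^^ j) x0)" and xR: "x \<in> range (\<lambda>j. (?g ^^ j) x0)"
    using w(1) assms(3) unfolding lifted_chain_def by auto
  show hw: "has_above N w"
  proof (rule ccontr)
    assume "\<not> has_above N w"
    then have "?g w = w" unfolding next_above_def by simp
    then have "x \<le> w" using increasing_orbit_fixpoint_ge[OF inc wR _ xR] by blast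
    then show False using w(2) by simp
  qed
  have "?g w \<le> x" using increasing_orbit_step_le[OF inc wR xR w(2)] .
  moreover have "\<not> ?g w < x"
  proof
    assume "?g w < x"
    then have "?g w \<le> w" using next_above_in_lifted_chain[OF w(1)] finite_lifted_chain[OF assms(1)]
      unfolding w_def by (intro Max_ge) auto
    then show False using add_le_next_above[OF assms(1) hw, of p] assms(2) by simp
  qed
  ultimately show "?g w = x" by simp
qed

lemma shift_chain_ge_above:
  assumes "finite M" "0 < p" "W \<in> p_chain p M" "has_below p M W"
    and "y \<in> shift_chain p M" "next_below p M W \<le> y"
  shows "W - p \<le> y"
proof -
  consider "y \<in> M" "y \<notin> p_chain p M" | Z where "y = Z - p" "Z \<in> p_chain p M" "p < Z"
    using assms(5) unfolding shift_chain_def shift_down_def by blast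
  then show ?thesis
  proof cases
    case 1
    show ?thesis
    proof (rule ccontr)
      assume "\<not> W - p \<le> y"
      then have "y \<le> next_below p M W" using le_next_below[OF assms(1,4) 1(1)] by simp
      then have "y = next_below p M W" using assms(6) by simp
      then show False using 1(2) next_below_in_p_chain[OF assms(3)] by simp
    qed
  next
    case 2
    have "\<not> Z < W"
    proof
      assume "Z < W"
      then have "Z \<le> next_below p M W" using p_chain_le_next_below[OF assms(1,3) 2(2)] by simp
      then show False using 2 assms(2,6) by simp
    qed
    then show ?thesis using 2(1) by simp
  qed
qed

lemma next_below_successor_in_p_chain:
  assumes "finite M" "0 < p" "x \<in> p_chain p M" "\<exists>z\<in>p_chain p M. x < z"
  defines "W \<equiv> Min {z\<in>p_chain p M. x < z}"
  shows "W \<in> p_chain p M" "x < W" "has_below p M W" "next_below p M W = x"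
proof -
  have "W \<in> {z\<in>p_chain p M. x < z}"
    unfolding W_def using finite_p_chain[OF assms(1)] assms(4) by (intro Min_in) auto
  then show W: "W \<in> p_chain p M" "x < W" by auto
  show hb: "has_below p M W" using p_chain_gap(1)[OF assms(1) W(1) assms(3) W(2)] .
  show "next_below p M W = x"
  proof (rule antisym)
    show "x \<le> next_below p M W" using p_chain_le_next_below[OF assms(1) W(1) assms(3) W(2)] .
    show "next_below p M W \<le> x"
    proof (rule ccontr)
      assume "\<not> next_below p M W \<le> x"
      then have "W \<le> next_below p M W"
        using next_below_in_p_chain[OF W(1)] finite_p_chain[OF assms(1)] unfolding W_def by (intro Min_le) auto
      then show False using next_below_add_le[OF assms(1) hb] assms(2) by simp
    qed
  qed
qed

lemma p_chain_successor:
  assumes "finite M" "0 \<notin> M" "0 < p" "x \<in> p_chain p M"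
  shows "(\<exists>z\<in>p_chain p M. x < z) \<longleftrightarrow> has_above (shift_chain p M) x"
    and "\<exists>z\<in>p_chain p M. x < z \<Longrightarrow> next_above p (shift_chain p M) x = Min {z\<in>p_chain p M. x < z}"
proof -
  let ?C = "p_chain p M" and ?N = "shift_chain p M"
  have up: "has_above ?N x \<and> next_above p ?N x = Min {z\<in>?C. x < z}" if above: "\<exists>z\<in>?C. x < z"
  proof -
    define W where "W = Min {z\<in>?C. x < z}"
    note W = next_below_successor_in_p_chain[OF assms(1,3,4) above, folded W_def]
    have gt: "p < W" using has_below_gt[OF assms(2) W(3)] .
    have in_N: "W - p \<in> ?N" unfolding shift_chain_def shift_down_def using W(1) gt by blast
    have le: "x \<le> W - p" using next_below_add_le[OF assms(1) W(3)] W(4) by simp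
    have "W - p \<le> y" if "y \<in> ?N" "x \<le> y" for y
      using shift_chain_ge_above[OF assms(1,3) W(1,3) that(1)] W(4) that(2) by simp
    then have "Min {y\<in>?N. x \<le> y} = W - p"
      using in_N le finite_shift_chain[OF assms(1)] by (intro antisym Min_le Min.boundedI) auto
    moreover have "has_above ?N x" unfolding has_above_def using in_N le by blast
    ultimately show ?thesis using gt unfolding next_above_def W_def by simp
  qed
  have top: "\<not> has_above ?N x" if "\<not> (\<exists>z\<in>?C. x < z)"
  proof -
    have "M \<noteq> {}" using assms(4) p_chain_empty_iff by blast
    then have "\<not> x < Max M" using that Max_in_p_chain by blast
    then have "x = Max M" using p_chain_le_Max[OF assms(1,4)] by simp
    then have "y < x" if "y \<in> ?N" for y using shift_chain_less_Max[OF assms(1,3) that] by simp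
    then show ?thesis unfolding has_above_def by (simp add: not_le)
  qed
  show "(\<exists>z\<in>?C. x < z) \<longleftrightarrow> has_above ?N x" using up top by blast
  show "\<exists>z\<in>?C. x < z \<Longrightarrow> next_above p ?N x = Min {z\<in>?C. x < z}" using up by simp
qed

lemma lifted_chain_shift_chain:
  assumes "finite M" "0 \<notin> M" "0 < p" "M \<noteq> {}"
  shows "lifted_chain p (shift_chain p M) (Min (p_chain p M)) = p_chain p M"
  unfolding lifted_chain_def
proof (rule range_funpow_from_Min)
  show "finite (p_chain p M)" "p_chain p M \<noteq> {}"
    using finite_p_chain[OF assms(1)] p_chain_empty_iff assms(4) by auto
  fix x assume x: "x \<in> p_chain p M"
  show "\<exists>z\<in>p_chain p M. x < z \<Longrightarrow> next_above p (shift_chain p M) x = Min {z\<in>p_chain p M. x < z}"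
    using p_chain_successor(2)[OF assms(1-3) x] .
  show "\<not> (\<exists>z\<in>p_chain p M. x < z) \<Longrightarrow> next_above p (shift_chain p M) x = x"
    using p_chain_successor(1)[OF assms(1-3) x] unfolding next_above_def by simp
qed

lemma unshift_shift_chain:
  assumes "finite M" "0 \<notin> M" "0 < p" "M \<noteq> {}"
  shows "unshift_chain p (shift_chain p M) (Min (p_chain p M)) = M"
  using shift_chain_recover[OF assms(1), of p]
  unfolding unshift_chain_def lifted_chain_shift_chain[OF assms] by simp

lemma shift_down_lifted_chain_subset:
  assumes "finite N" "0 < p" "x0 \<le> p \<or> (N \<noteq> {} \<and> x0 = Min N + p)"
  shows "shift_down p (lifted_chain p N x0) \<subseteq> N"
proof
  fix y assume "y \<in> shift_down p (lifted_chain p N x0)"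
  then obtain X where X: "y = X - p" "X \<in> lifted_chain p N x0" "p < X" unfolding shift_down_def by blast
  show "y \<in> N"
  proof (cases "X = x0")
    case True
    then have "N \<noteq> {}" "y = Min N" using assms(3) X(1,3) by auto
    then show ?thesis using assms(1) by simp
  next
    case False
    then show ?thesis using lifted_chain_predecessor(3,4)[OF assms(1,2) X(2) False] X(1)
      next_above_diff_in[OF assms(1)] by metis
  qed
qed

lemma lifted_chain_inter_subset:
  assumes "finite N" "0 \<notin> N"
  shows "lifted_chain p N x0 \<inter> N \<subseteq> shift_down p (lifted_chain p N x0)"
proof
  fix x assume x: "x \<in> lifted_chain p N x0 \<inter> N"
  then have hx: "has_above N x" unfolding has_above_def by blast
  have "Min {y\<in>N. x \<le> y} = x" using x assms(1) by (intro antisym Min_le Min.boundedI) auto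
  then have "next_above p N x = x + p" using next_above_eq[OF assms(1) hx] by simp
  moreover have "next_above p N x \<in> lifted_chain p N x0" using x next_above_in_lifted_chain by blast
  moreover have "x \<noteq> 0" using x assms(2) by (metis IntD2)
  ultimately have "x + p \<in> {X \<in> lifted_chain p N x0. p < X}" by simp
  then show "x \<in> shift_down p (lifted_chain p N x0)" unfolding shift_down_def by force
qed

lemma Max_unshift_chain:
  assumes "finite N" "0 < p"
  shows "Max (unshift_chain p N x0) = Max (lifted_chain p N x0)"
proof -
  let ?R = "lifted_chain p N x0"
  have finR: "finite ?R" using finite_lifted_chain[OF assms(1)] .
  have "y < Max ?R" if "y \<in> N" for y
    using Max_lifted_chain_no_above[OF assms] that unfolding has_above_def by (simp add: not_le)
  then have "y \<le> Max ?R" if "y \<in> unshift_chain p N x0" for y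
    using that finR unfolding unshift_chain_def by (auto intro: less_imp_le)
  moreover have "Max ?R \<in> ?R" using finR start_in_lifted_chain[of x0 p N] by (intro Max_in) auto
  moreover have "finite (unshift_chain p N x0)" using finR assms(1) unfolding unshift_chain_def by simp
  ultimately show ?thesis unfolding unshift_chain_def by (intro Max_eqI) auto
qed

lemma unshift_chain_start_no_below:
  assumes "finite N" "0 \<notin> N" "0 < p" "x0 \<le> p \<or> (N \<noteq> {} \<and> x0 = Min N + p)"
  shows "\<not> has_below p (unshift_chain p N x0) x0"
proof
  let ?R = "lifted_chain p N x0"
  assume "has_below p (unshift_chain p N x0) x0"
  then obtain Y where Y: "Y \<in> unshift_chain p N x0" "Y + p \<le> x0" unfolding has_below_def by blast
  have "Y \<notin> ?R" using lifted_chain_ge_start[OF assms(1)] Y(2) assms(3) by fastforce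
  then have YN: "Y \<in> N" "Y \<notin> shift_down p ?R" using Y(1) unfolding unshift_chain_def by auto
  then have "Y \<noteq> 0" using assms(2) by metis
  then have x0: "x0 = Min N + p" using assms(4) Y(2) by auto
  moreover have "Min N \<le> Y" using YN(1) assms(1) by simp
  ultimately have "Y = x0 - p" "p < x0" using Y(2) \<open>Y \<noteq> 0\<close> by auto
  then have "Y \<in> shift_down p ?R" unfolding shift_down_def using start_in_lifted_chain by blast
  then show False using YN(2) by blast
qed

lemma next_below_unshift_chain:
  assumes "finite N" "0 \<notin> N" "0 < p" "x \<in> lifted_chain p N x0" "x \<noteq> x0"
  shows "next_below p (unshift_chain p N x0) x = Max {z \<in> lifted_chain p N x0. z < x}"
proof -
  let ?R = "lifted_chain p N x0" and ?M = "unshift_chain p N x0"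
  define w where "w = Max {z \<in> ?R. z < x}"
  note pred = lifted_chain_predecessor[OF assms(1,3-5), folded w_def]
  define y where "y = x - p"
  have y: "y \<in> N" "w \<le> y" "x = y + p" "\<forall>v\<in>N. w \<le> v \<longrightarrow> y \<le> v"
    using next_above_diff_in[OF assms(1) pred(3), of p] add_le_next_above[OF assms(1) pred(3), of p]
      next_above_diff_le[OF assms(1) pred(3), of _ p] pred(4) unfolding y_def by auto
  have finM: "finite ?M" using assms(1) finite_lifted_chain unfolding unshift_chain_def by auto
  have wM: "w \<in> ?M" using pred(1) unfolding unshift_chain_def by blast
  have hb: "has_below p ?M x" unfolding has_below_def using wM y(2,3) by auto
  let ?Y = "next_below p ?M x"
  have Y: "?Y \<in> ?M" "?Y \<le> y" using next_below_in[OF finM hb] next_below_add_le[OF finM hb] y(3) by auto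
  have "?Y \<le> w"
  proof (cases "?Y \<in> ?R")
    case True
    have "?Y < x" using Y(2) y(3) assms(3) by simp
    then show ?thesis using True finite_lifted_chain[OF assms(1)] unfolding w_def by (intro Max_ge) auto
  next
    case False
    then have YN: "?Y \<in> N" "?Y \<notin> shift_down p ?R" using Y(1) unfolding unshift_chain_def by auto
    show ?thesis
    proof (rule ccontr)
      assume "\<not> ?Y \<le> w"
      then have "?Y = y" using y(4) YN(1) Y(2) by (auto intro: antisym)
      moreover have "y \<noteq> 0" using y(1) assms(2) by metis
      ultimately have "?Y \<in> shift_down p ?R"
        unfolding shift_down_def using assms(4) y(3) by (intro image_eqI[of _ _ x]) auto
      then show False using YN(2) by blast
    qed
  qed
  moreover have "w \<le> ?Y" using le_next_below[OF finM hb wM] y(2,3) by simp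
  ultimately show ?thesis unfolding w_def by simp
qed

lemma p_chain_unshift_chain:
  assumes "finite N" "0 \<notin> N" "0 < p" "x0 \<le> p \<or> (N \<noteq> {} \<and> x0 = Min N + p)"
  shows "p_chain p (unshift_chain p N x0) = lifted_chain p N x0"
proof -
  let ?R = "lifted_chain p N x0" and ?M = "unshift_chain p N x0"
  have finR: "finite ?R" and x0: "x0 \<in> ?R" and ge: "\<And>z. z \<in> ?R \<Longrightarrow> x0 \<le> z"
    using finite_lifted_chain[OF assms(1)] start_in_lifted_chain lifted_chain_ge_start[OF assms(1)] by auto
  have "?M \<noteq> {}" using x0 unfolding unshift_chain_def by blast
  then have "p_chain p ?M = range (\<lambda>j. (next_below p ?M ^^ j) (Max ?R))"
    unfolding p_chain_def Max_unshift_chain[OF assms(1,3)] by simp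
  also have "\<dots> = ?R"
  proof (rule range_funpow_from_Max[OF finR])
    show "?R \<noteq> {}" using x0 by blast
    fix x assume x: "x \<in> ?R"
    show "\<exists>z\<in>?R. z < x \<Longrightarrow> next_below p ?M x = Max {z \<in> ?R. z < x}"
      using next_below_unshift_chain[OF assms(1-3) x] ge by fastforce
    assume "\<not> (\<exists>z\<in>?R. z < x)"
    then have "x = x0" using x0 ge[OF x] by fastforce
    then show "next_below p ?M x = x"
      using unshift_chain_start_no_below[OF assms] unfolding next_below_def by simp
  qed
  finally show ?thesis .
qed

lemma unshift_chain_props:
  assumes "finite N" "0 \<notin> N" "0 < p" "0 < x0" "x0 \<le> p \<or> (N \<noteq> {} \<and> x0 = Min N + p)"
  defines "M \<equiv> unshift_chain p N x0"
  shows "finite M" "0 \<notin> M" "M \<noteq> {}" "shift_chain p M = N" "Min (p_chain p M) = x0"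
proof -
  let ?R = "lifted_chain p N x0"
  have chain: "p_chain p M = ?R" unfolding M_def using p_chain_unshift_chain[OF assms(1-3,5)] .
  have ge: "\<And>z. z \<in> ?R \<Longrightarrow> x0 \<le> z" using lifted_chain_ge_start[OF assms(1)] .
  show "finite M" unfolding M_def unshift_chain_def using assms(1) finite_lifted_chain by auto
  show "0 \<notin> M" unfolding M_def unshift_chain_def using assms(2,4) ge by force
  show "M \<noteq> {}" unfolding M_def unshift_chain_def using start_in_lifted_chain by blast
  show "shift_chain p M = N"
    unfolding shift_chain_def chain using shift_down_lifted_chain_subset[OF assms(1,3,5)]
      lifted_chain_inter_subset[OF assms(1,2), of p x0] unfolding M_def unshift_chain_def by blast
  show "Min (p_chain p M) = x0"
    unfolding chain using start_in_lifted_chain[of x0 p N] ge finite_lifted_chain[OF assms(1)]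
    by (intro antisym Min_le Min.boundedI) auto
qed

lemma empty_iff_chain_data:
  assumes "finite M" "0 \<notin> M"
  shows "M = {} \<longleftrightarrow> shift_chain p M = {} \<and> 0 \<notin> chain_cover p M"
proof
  assume "shift_chain p M = {} \<and> 0 \<notin> chain_cover p M"
  moreover have "Min (p_chain p M) - p \<in> shift_chain p M" if "M \<noteq> {}" "p < Min (p_chain p M)"
    using that finite_p_chain[OF assms(1)] p_chain_empty_iff
    unfolding shift_chain_def shift_down_def by (auto intro: Min_in)
  ultimately show "M = {}" using zero_in_chain_cover_iff[OF assms] by fastforce
qed (simp add: shift_chain_empty chain_cover_empty)

lemma mod_inj_on_1_to_p:
  fixes a b p :: nat
  assumes "0 < a" "a \<le> p" "0 < b" "b \<le> p" "[a = b] (mod p)"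
  shows "a = b"
proof -
  have "a mod p = (if a = p then 0 else a)" "b mod p = (if b = p then 0 else b)" using assms(1-4) by auto
  then show ?thesis using assms by (auto simp: cong_def split: if_splits)
qed

lemma card_chain_cover_cong:
  assumes "finite M" "0 \<notin> M" "0 \<in> chain_cover p M"
  shows "0 < Min (p_chain p M)" "Min (p_chain p M) \<le> p"
    and "[card (chain_cover p M) = Min (p_chain p M)] (mod p)"
proof -
  have ne: "M \<noteq> {}" and le: "Min (p_chain p M) \<le> p" using zero_in_chain_cover_iff[OF assms(1,2)] assms(3) by auto
  show "Min (p_chain p M) \<le> p" using le .
  have "Min (p_chain p M) \<in> p_chain p M"
    using finite_p_chain[OF assms(1)] ne p_chain_empty_iff by (intro Min_in) auto
  then have "Min (p_chain p M) \<in> M" using p_chain_subset[OF assms(1)] by blast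
  then show "0 < Min (p_chain p M)" using assms(2) by (metis gr0I)
  show "[card (chain_cover p M) = Min (p_chain p M)] (mod p)"
    using card_chain_cover[OF assms(1) ne assms(2)] le by (simp add: cong_def)
qed

lemma Min_p_chain_determined:
  assumes "finite M1" "finite M2" "0 \<notin> M1" "0 \<notin> M2" "M1 \<noteq> {}" "M2 \<noteq> {}" "0 < p"
    and "shift_chain p M1 = shift_chain p M2"
    and "0 \<in> chain_cover p M1 \<longleftrightarrow> 0 \<in> chain_cover p M2"
    and "[card (chain_cover p M1) = card (chain_cover p M2)] (mod p)"
  shows "Min (p_chain p M1) = Min (p_chain p M2)"
proof (cases "0 \<in> chain_cover p M1")
  case True
  note b1 = card_chain_cover_cong[OF assms(1,3) True]
  note b2 = card_chain_cover_cong[OF assms(2,4) True[unfolded assms(9)]]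
  have "[Min (p_chain p M1) = Min (p_chain p M2)] (mod p)"
    using b1(3) b2(3) assms(10) by (meson cong_sym cong_trans)
  then show ?thesis by (rule mod_inj_on_1_to_p[OF b1(1,2) b2(1,2)])
next
  case False
  have "p < Min (p_chain p M1)" using False zero_in_chain_cover_iff[OF assms(1,3)] assms(5) by simp
  moreover have "p < Min (p_chain p M2)"
    using False[unfolded assms(9)] zero_in_chain_cover_iff[OF assms(2,4)] assms(6) by simp
  ultimately show ?thesis
    using Min_shift_chain[OF assms(1,5,7)] Min_shift_chain[OF assms(2,6,7)] assms(8) by simp
qed

lemma chain_data_inj:
  assumes "finite M1" "finite M2" "0 \<notin> M1" "0 \<notin> M2" "0 < p"
    and "shift_chain p M1 = shift_chain p M2"
    and "0 \<in> chain_cover p M1 \<longleftrightarrow> 0 \<in> chain_cover p M2"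
    and "[card (chain_cover p M1) = card (chain_cover p M2)] (mod p)"
  shows "M1 = M2"
proof (cases "M1 = {} \<or> M2 = {}")
  case True
  then show ?thesis
    using empty_iff_chain_data[OF assms(1,3), of p] empty_iff_chain_data[OF assms(2,4), of p]
      assms(6,7) by auto
next
  case False
  then have "Min (p_chain p M1) = Min (p_chain p M2)"
    using Min_p_chain_determined[OF assms(1-4) _ _ assms(5-8)] by blast
  then show ?thesis
    using unshift_shift_chain[OF assms(1,3,5)] unshift_shift_chain[OF assms(2,4,5)] False assms(6) by metis
qed

text \<open>Conditions (i)--(iii) on \<open>\<lambda> = sc_diagram M\<close> and \<open>\<lambda>^(1)* = sc_diagram N\<close>, read off on the
  half hooks (see \<open>sc_diagram_conditions_iff_chain_lift\<close>).\<close>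

definition chain_lift :: "nat \<Rightarrow> nat set \<Rightarrow> nat \<Rightarrow> int \<Rightarrow> nat set \<Rightarrow> bool" where
  "chain_lift p N e m M \<longleftrightarrow> finite M \<and> 0 \<notin> M \<and> shift_chain p M = N \<and> (0 \<in> chain_cover p M \<longleftrightarrow> e = 1) \<and>
     [int (card (chain_cover p M)) - int e = m] (mod int p)"

lemma chain_lift_exists:
  assumes "finite N" "0 \<notin> N" "0 < p" "e \<in> {0, 1}" "0 \<le> m" "m < int p" "e = 0 \<Longrightarrow> m = 0"
  shows "\<exists>M. chain_lift p N e m M"
proof -
  consider "e = 0" "N = {}" | "e = 0" "N \<noteq> {}" | "e = 1" using assms(4) by blast
  then show ?thesis
  proof cases
    case 1
    then show ?thesis
      using assms(7) by (intro exI[of _ "{}"]) (simp add: chain_lift_def shift_chain_empty chain_cover_empty)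
  next
    case 2
    define x0 where "x0 = Min N + p"
    let ?M = "unshift_chain p N x0"
    note M = unshift_chain_props[OF assms(1-3), of x0, folded x0_def]
    have "Min N \<in> N" using assms(1) 2(2) by simp
    then have "Min N \<noteq> 0" using assms(2) by metis
    then have gt: "p < x0" unfolding x0_def by simp
    then have M: "finite ?M" "0 \<notin> ?M" "?M \<noteq> {}" "shift_chain p ?M = N" "Min (p_chain p ?M) = x0"
      using M 2(2) x0_def by auto
    have "0 \<notin> chain_cover p ?M" using zero_in_chain_cover_iff[OF M(1,2)] M(5) gt by simp
    moreover have "card (p_chain p ?M) \<noteq> 0" using finite_p_chain[OF M(1)] p_chain_empty_iff M(3) by auto
    then have "card (chain_cover p ?M) = p * card (p_chain p ?M)"
      using card_chain_cover[OF M(1,3,2)] M(5) gt by (cases "card (p_chain p ?M)") auto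
    ultimately show ?thesis using M 2(1) assms(7) by (intro exI[of _ ?M]) (simp add: chain_lift_def cong_def)
  next
    case 3
    define x0 where "x0 = nat m + 1"
    let ?M = "unshift_chain p N x0"
    have x0: "0 < x0" "x0 \<le> p" using assms(5,6) unfolding x0_def by auto
    have M: "finite ?M" "0 \<notin> ?M" "?M \<noteq> {}" "shift_chain p ?M = N" "Min (p_chain p ?M) = x0"
      using unshift_chain_props[OF assms(1-3) x0(1)] x0(2) by auto
    have "0 \<in> chain_cover p ?M" using zero_in_chain_cover_iff[OF M(1,2)] M(3,5) x0(2) by simp
    moreover have "card (chain_cover p ?M) = p * (card (p_chain p ?M) - 1) + x0"
      using card_chain_cover[OF M(1,3,2)] M(5) x0(2) by simp
    then have "int (card (chain_cover p ?M)) - 1 = int p * int (card (p_chain p ?M) - 1) + m"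
      unfolding x0_def using assms(5) by simp
    ultimately show ?thesis using M 3 by (intro exI[of _ ?M]) (simp add: chain_lift_def cong_def)
  qed
qed

lemma chain_lift_unique:
  assumes "0 < p" "chain_lift p N e m M1" "chain_lift p N e m M2"
  shows "M1 = M2"
proof -
  have "[int (card (chain_cover p M1)) - int e = int (card (chain_cover p M2)) - int e] (mod int p)"
    using assms(2,3) unfolding chain_lift_def by (meson cong_sym cong_trans)
  then have "[card (chain_cover p M1) = card (chain_cover p M2)] (mod p)"
    by (metis cong_add_rcancel cong_int_iff diff_add_cancel)
  then show ?thesis using chain_data_inj[OF _ _ _ _ assms(1)] assms(2,3) unfolding chain_lift_def by blast
qed

lemma chain_data_hook_condition:
  assumes "finite M" "0 \<notin> M" "0 < p"
    and "\<forall>y\<in>shift_chain p M. \<not> int p dvd 2 * int y - 1"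
    and "0 \<in> chain_cover p M \<Longrightarrow> \<not> int p dvd 2 * int (card (chain_cover p M)) - 1"
  shows "\<forall>y\<in>M. \<not> int p dvd 2 * int y - 1"
proof
  fix y assume y: "y \<in> M"
  consider "y \<notin> p_chain p M" | "y \<in> p_chain p M" "p < y" | "y \<in> p_chain p M" "y \<le> p" by linarith
  then show "\<not> int p dvd 2 * int y - 1"
  proof cases
    case 1
    then show ?thesis using y assms(4) unfolding shift_chain_def by blast
  next
    case 2
    then have "y - p \<in> shift_chain p M" unfolding shift_chain_def shift_down_def by blast
    then have "\<not> int p dvd 2 * int (y - p) - 1" using assms(4) by blast
    moreover have "2 * int y - 1 = (2 * int (y - p) - 1) + 2 * int p" using 2(2) by simp
    ultimately show ?thesis by (simp only: dvd_add_times_triv_right_iff not_False_eq_True)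
  next
    case 3
    then have "y = Min (p_chain p M)" using p_less_nonmin_p_chain[OF assms(1,2) 3(1)] by (metis not_le)
    then have cover: "0 \<in> chain_cover p M"
      using zero_in_chain_cover_iff[OF assms(1,2)] y 3(2) by auto
    then have "[int (card (chain_cover p M)) = int y] (mod int p)"
      using card_chain_cover_cong(3)[OF assms(1,2) cover] \<open>y = _\<close> by (simp add: cong_int_iff)
    then have "[2 * int (card (chain_cover p M)) - 1 = 2 * int y - 1] (mod int p)"
      by (intro cong_diff cong_mult cong_refl)
    then show ?thesis using assms(5)[OF cover] cong_dvd_iff by blast
  qed
qed

section \<open>Self-conjugate diagrams and their diagonal half hooks\<close>

definition diag_count :: "nat set \<Rightarrow> nat \<Rightarrow> nat" where
  "diag_count M c = card {y\<in>M. c < y}"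

definition sym_diagram :: "(nat \<Rightarrow> nat) \<Rightarrow> diagram" where
  "sym_diagram f = {(i,j). 1 \<le> i \<and> i \<le> j \<and> i \<le> f (j - i)} \<union> {(i,j). 1 \<le> j \<and> j < i \<and> j \<le> f (i - j)}"

text \<open>A finite set \<open>M\<close> of positive integers encodes the self-conjugate diagram whose diagonal hook
  lengths are the numbers \<open>2 y - 1\<close>, \<open>y \<in> M\<close>; its \<open>c\<close>-th diagonal above the main one has
  \<open>diag_count M c\<close> nodes.\<close>

definition sc_diagram :: "nat set \<Rightarrow> diagram" where
  "sc_diagram M = sym_diagram (diag_count M)"

definition diag_len :: "diagram \<Rightarrow> nat \<Rightarrow> nat" where
  "diag_len D c = card {i. 1 \<le> i \<and> (i, i + c) \<in> D}"

lemma diag_count_Suc: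
  assumes "finite M"
  shows "diag_count M c = diag_count M (Suc c) + (if Suc c \<in> M then 1 else 0)"
proof -
  have "{y\<in>M. c < y} = {y\<in>M. Suc c < y} \<union> (if Suc c \<in> M then {Suc c} else {})"
    by (auto intro: Suc_lessI)
  then show ?thesis unfolding diag_count_def using assms by (auto simp: card_insert_if)
qed

lemma diag_count_antimono: "finite M \<Longrightarrow> c \<le> c' \<Longrightarrow> diag_count M c' \<le> diag_count M c"
  unfolding diag_count_def by (intro card_mono) auto

lemma diag_count_le_add: "finite M \<Longrightarrow> diag_count M c \<le> diag_count M (c + d) + d"
proof (induction d)
  case (Suc d)
  then show ?case using diag_count_Suc[OF Suc.prems, of "c + d"] by (simp split: if_splits)
qed simp

lemma diag_count_pos_iff:
  assumes "finite M"
  shows "0 < diag_count M c \<longleftrightarrow> M \<noteq> {} \<and> c < Max M"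
proof -
  have "0 < diag_count M c \<longleftrightarrow> (\<exists>y\<in>M. c < y)" unfolding diag_count_def using assms by (auto simp: card_gt_0_iff)
  also have "\<dots> \<longleftrightarrow> M \<noteq> {} \<and> c < Max M" using Max_gr_iff[OF assms] by blast
  finally show ?thesis .
qed

lemma mem_sym_diagram_min_max:
  "(i, j) \<in> sym_diagram f \<longleftrightarrow> 1 \<le> min i j \<and> min i j \<le> f (max i j - min i j)"
  unfolding sym_diagram_def by (cases "i \<le> j") auto

lemma mem_sym_diagram_diag: "(i, i + c) \<in> sym_diagram f \<longleftrightarrow> 1 \<le> i \<and> i \<le> f c"
  unfolding sym_diagram_def by auto

lemma self_conjugate_sym_diagram: "self_conjugate (sym_diagram f)"
  unfolding self_conjugate_def conjugate_def sym_diagram_def by fastforce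

text \<open>Moving from a node of the diagonal \<open>d\<close> to a node further up-left lowers \<open>max i j\<close>, so it can
  cross over to a diagonal \<open>d'\<close> only by losing at least \<open>d' - d\<close> from \<open>min i j\<close>; the unit steps
  of \<open>f\<close> allow exactly that.\<close>

lemma young_sym_diagram:
  assumes mono: "\<And>c c'. c \<le> c' \<Longrightarrow> f c' \<le> f c"
    and unit: "\<And>c d. f c \<le> f (c + d) + d"
    and vanish: "\<And>c. n \<le> c \<Longrightarrow> f c = 0"
  shows "young (sym_diagram f)"
proof -
  have bound: "max i j \<le> n + f 0" if "(i, j) \<in> sym_diagram f" for i j
  proof -
    let ?d = "max i j - min i j"
    have "1 \<le> f ?d" "min i j \<le> f ?d" using that unfolding mem_sym_diagram_min_max by auto
    then have "?d < n" using vanish by (metis not_le not_one_le_zero)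
    moreover have "f ?d \<le> f 0" using mono by simp
    ultimately show ?thesis using \<open>min i j \<le> f ?d\<close> by linarith
  qed
  have "sym_diagram f \<subseteq> {1..n + f 0} \<times> {1..n + f 0}"
  proof (rule subrelI)
    fix i j assume ij: "(i, j) \<in> sym_diagram f"
    then have "1 \<le> min i j" unfolding mem_sym_diagram_min_max by simp
    then show "(i, j) \<in> {1..n + f 0} \<times> {1..n + f 0}" using bound[OF ij] by simp
  qed
  then have "finite (sym_diagram f)" by (rule finite_subset) simp
  moreover have "(i', j') \<in> sym_diagram f"
    if "(i, j) \<in> sym_diagram f" "1 \<le> i'" "i' \<le> i" "1 \<le> j'" "j' \<le> j" for i j i' j'
  proof -
    define a where "a = min i j"
    define d where "d = max i j - min i j"
    define a' where "a' = min i' j'"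
    define d' where "d' = max i' j' - min i' j'"
    have a: "1 \<le> a" "a \<le> f d" using that(1) unfolding mem_sym_diagram_min_max a_def d_def by auto
    have "a' \<le> a" "a' + d' \<le> a + d" "1 \<le> a'" using that(2-5) unfolding a_def d_def a'_def d'_def by auto
    moreover have "a' \<le> f d'"
    proof (cases "d' \<le> d")
      case True then show ?thesis using mono[OF True] a \<open>a' \<le> a\<close> by linarith
    next
      case False then show ?thesis using unit[of d "d' - d"] a \<open>a' + d' \<le> a + d\<close> by simp
    qed
    ultimately show ?thesis unfolding mem_sym_diagram_min_max a'_def d'_def by simp
  qed
  ultimately show ?thesis unfolding young_def by (auto simp: mem_sym_diagram_min_max)
qed

lemma young_sc_diagram: "finite M \<Longrightarrow> young (sc_diagram M)"
  unfolding sc_diagram_def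
proof (rule young_sym_diagram)
  assume fin: "finite M"
  show "\<And>c c'. c \<le> c' \<Longrightarrow> diag_count M c' \<le> diag_count M c" using diag_count_antimono[OF fin] .
  show "\<And>c d. diag_count M c \<le> diag_count M (c + d) + d" using diag_count_le_add[OF fin] .
  show "\<And>c. Max (insert 0 M) \<le> c \<Longrightarrow> diag_count M c = 0"
    using fin unfolding diag_count_def by (fastforce simp: card_eq_0_iff)
qed

lemma self_conjugate_sc_diagram: "self_conjugate (sc_diagram M)"
  unfolding sc_diagram_def by (rule self_conjugate_sym_diagram)

lemma diag_len_sym_diagram: "diag_len (sym_diagram f) c = f c"
proof -
  have "{i. 1 \<le> i \<and> (i, i + c) \<in> sym_diagram f} = {1..f c}" using mem_sym_diagram_diag by auto
  then show ?thesis unfolding diag_len_def by simp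
qed

lemma sc_diagram_inj:
  assumes "finite M1" "finite M2" "0 \<notin> M1" "0 \<notin> M2" "sc_diagram M1 = sc_diagram M2"
  shows "M1 = M2"
proof -
  have f: "diag_count M1 c = diag_count M2 c" for c
    using diag_len_sym_diagram[of "diag_count M1" c] diag_len_sym_diagram[of "diag_count M2" c] assms(5)
    unfolding sc_diagram_def by simp
  have "y \<in> M1 \<longleftrightarrow> y \<in> M2" for y
  proof (cases y)
    case (Suc c)
    then show ?thesis
      using diag_count_Suc[OF assms(1), of c] diag_count_Suc[OF assms(2), of c] f[of c] f[of "Suc c"]
      by (auto split: if_splits)
  qed (use assms(3,4) in simp)
  then show ?thesis by blast
qed

lemma young_downward:
  "young D \<Longrightarrow> (i, j) \<in> D \<Longrightarrow> 1 \<le> i' \<Longrightarrow> i' \<le> i \<Longrightarrow> 1 \<le> j' \<Longrightarrow> j' \<le> j \<Longrightarrow> (i', j') \<in> D"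
  unfolding young_def by blast

lemma young_pos: "young D \<Longrightarrow> (i, j) \<in> D \<Longrightarrow> 1 \<le> i \<and> 1 \<le> j"
  unfolding young_def by blast

lemma young_finite: "young D \<Longrightarrow> finite D"
  unfolding young_def by blast

lemma mem_diag_iff:
  assumes "young D"
  shows "(i, i + c) \<in> D \<longleftrightarrow> 1 \<le> i \<and> i \<le> diag_len D c"
proof -
  let ?S = "{i. 1 \<le> i \<and> (i, i + c) \<in> D}"
  have "?S \<subseteq> fst ` D" by force
  then have finS: "finite ?S" using young_finite[OF assms] finite_subset by blast
  have "\<exists>m. ?S = {1..m}"
  proof (cases "?S = {}")
    case False
    have "(Max ?S, Max ?S + c) \<in> D" using Max_in[OF finS False] by simp
    then have "{1..Max ?S} \<subseteq> ?S" using young_downward[OF assms] by auto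
    moreover have "?S \<subseteq> {1..Max ?S}" using finS by auto
    ultimately show ?thesis by blast
  qed (auto intro: exI[of _ 0])
  then obtain m where m: "?S = {1..m}" by blast
  then have "diag_len D c = m" unfolding diag_len_def by simp
  moreover have "(i, i + c) \<in> D \<longleftrightarrow> i \<in> ?S" using young_pos[OF assms] by auto
  ultimately show ?thesis unfolding m by simp
qed

lemma young_self_conjugate_eq_sym_diagram:
  assumes "young D" "self_conjugate D"
  shows "D = sym_diagram (diag_len D)"
proof -
  have sym: "(i, j) \<in> D \<longleftrightarrow> (j, i) \<in> D" for i j
    using assms(2) unfolding self_conjugate_def conjugate_def by blast
  have "(i, j) \<in> D \<longleftrightarrow> (min i j, min i j + (max i j - min i j)) \<in> D" for i j
    using sym[of i j] by (cases "i \<le> j") (simp_all add: max_def min_def)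
  then show ?thesis
    unfolding set_eq_iff mem_diag_iff[OF assms(1)] by (auto simp: mem_sym_diagram_min_max)
qed

lemma diag_len_props:
  assumes "young D"
  shows diag_len_Suc_le: "diag_len D (Suc c) \<le> diag_len D c"
    and diag_len_le_Suc: "diag_len D c \<le> diag_len D (Suc c) + 1"
    and diag_len_eventually_0: "\<exists>n. \<forall>c\<ge>n. diag_len D c = 0"
proof -
  let ?f = "diag_len D"
  note mem = mem_diag_iff[OF assms]
  show "?f (Suc c) \<le> ?f c"
  proof (cases "?f (Suc c) = 0")
    case False
    then have "(?f (Suc c), ?f (Suc c) + Suc c) \<in> D" using mem[of "?f (Suc c)" "Suc c"] by simp
    then have "(?f (Suc c), ?f (Suc c) + c) \<in> D" using young_downward[OF assms] False by fastforce
    then show ?thesis using mem by simp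
  qed simp
  show "?f c \<le> ?f (Suc c) + 1"
  proof (cases "?f c \<le> 1")
    case False
    then have "(?f c, ?f c + c) \<in> D" using mem by simp
    then have "(?f c - 1, ?f c + c) \<in> D" using young_downward[OF assms] False by fastforce
    moreover have "?f c + c = (?f c - 1) + Suc c" using False by simp
    ultimately have "?f c - 1 \<le> ?f (Suc c)" using mem by metis
    then show ?thesis by simp
  qed simp
  obtain n where n: "\<And>i j. (i, j) \<in> D \<Longrightarrow> j < n"
    using young_finite[OF assms] finite_nat_set_iff_bounded[of "snd ` D"] by force
  have "?f c = 0" if "n \<le> c" for c
    using mem[of 1 c] n[of 1 "1 + c"] that by (cases "?f c") auto
  then show "\<exists>n. \<forall>c\<ge>n. ?f c = 0" by blast
qed

lemma unit_steps_eq_diag_count: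
  fixes f :: "nat \<Rightarrow> nat"
  assumes "\<And>c. f (Suc c) \<le> f c" "\<And>c. f c \<le> f (Suc c) + 1" "\<And>c. n \<le> c \<Longrightarrow> f c = 0"
  defines "M \<equiv> {Suc c | c. f (Suc c) < f c}"
  shows "finite M" "0 \<notin> M" "f = diag_count M"
proof -
  have "M \<subseteq> {..n}" unfolding M_def using assms(3) by (fastforce simp: not_less_eq_eq)
  then show finM: "finite M" using finite_subset by blast
  show "0 \<notin> M" unfolding M_def by auto
  have "f c = diag_count M c" for c
  proof (induction "n - c" arbitrary: c)
    case 0
    then have "\<forall>y\<in>M. y \<le> c" using \<open>M \<subseteq> {..n}\<close> by auto
    then have "{y\<in>M. c < y} = {}" by auto
    then have "diag_count M c = 0" unfolding diag_count_def by (metis card.empty)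
    then show ?case using assms(3) 0 by simp
  next
    case (Suc k)
    then have "f (Suc c) = diag_count M (Suc c)" by simp
    moreover have "Suc c \<in> M \<longleftrightarrow> f (Suc c) < f c" unfolding M_def by auto
    ultimately show ?case using diag_count_Suc[OF finM, of c] assms(1,2)[of c] by auto
  qed
  then show "f = diag_count M" ..
qed

lemma sc_diagram_surj:
  assumes "young D" "self_conjugate D"
  shows "\<exists>M. finite M \<and> 0 \<notin> M \<and> D = sc_diagram M"
proof -
  obtain n where n: "\<And>c. n \<le> c \<Longrightarrow> diag_len D c = 0" using diag_len_eventually_0[OF assms(1)] by blast
  let ?M = "{Suc c | c. diag_len D (Suc c) < diag_len D c}"
  have "finite ?M" "0 \<notin> ?M" "diag_len D = diag_count ?M"
    using unit_steps_eq_diag_count[of "diag_len D", OF diag_len_Suc_le[OF assms(1)] diag_len_le_Suc[OF assms(1)] n]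
    by simp_all
  then show ?thesis using young_self_conjugate_eq_sym_diagram[OF assms] unfolding sc_diagram_def by auto
qed

section \<open>The rim of a self-conjugate diagram\<close>

definition content :: "nat \<times> nat \<Rightarrow> int" where
  "content x = int (snd x) - int (fst x)"

lemma rim_content_order:
  assumes "young D" "x \<in> rim D" "z \<in> rim D" "fst z < fst x"
  shows "content x < content z"
proof (rule ccontr)
  assume "\<not> content x < content z"
  then have le: "int (snd z) - int (fst z) \<le> int (snd x) - int (fst x)" unfolding content_def by simp
  have "x \<in> D" "z \<in> D" using assms(2,3) unfolding rim_def by auto
  then have "(fst z + 1, snd z + 1) \<in> D"
    using young_downward[OF assms(1), of "fst x" "snd x" "fst z + 1" "snd z + 1"] young_pos[OF assms(1)]
      le assms(4) by fastforce
  then show False using assms(3) unfolding rim_def by (auto simp: case_prod_beta)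
qed

lemma rim_label_content:
  assumes "young D" "x \<in> rim D"
  shows "rim_label D x = card {z\<in>rim D. content x < content z} + 1"
proof -
  have "fst z < fst x \<or> (fst z = fst x \<and> snd x < snd z) \<longleftrightarrow> content x < content z" if "z \<in> rim D" for z
    using rim_content_order[OF assms(1,2) that] rim_content_order[OF assms(1) that assms(2)]
    unfolding content_def by (cases "fst z < fst x"; cases "fst x < fst z") auto
  then show ?thesis unfolding rim_label_def by (metis (no_types, lifting) Collect_cong)
qed

lemma inj_on_content_rim: "young D \<Longrightarrow> inj_on content (rim D)"
proof (rule inj_onI)
  fix x z assume "young D" "x \<in> rim D" "z \<in> rim D" "content x = content z"
  then have "fst x = fst z"
    using rim_content_order[of D x z] rim_content_order[of D z x] by (cases "fst z < fst x"; cases "fst x < fst z") auto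
  then show "x = z" using \<open>content x = content z\<close> unfolding content_def by (simp add: prod_eq_iff)
qed

lemma diag_count_le_Max_diff: "finite M \<Longrightarrow> diag_count M c \<le> Max M - c"
proof -
  assume "finite M"
  then have "{y\<in>M. c < y} \<subseteq> {c<..Max M}" by auto
  then have "diag_count M c \<le> card {c<..Max M}" unfolding diag_count_def by (intro card_mono) auto
  then show ?thesis by simp
qed

lemma rim_sym_diagram:
  "(i, j) \<in> rim (sym_diagram f) \<longleftrightarrow> (1 \<le> i \<and> i \<le> j \<and> i = f (j - i)) \<or> (1 \<le> j \<and> j < i \<and> j = f (i - j))"
proof -
  have "(i, j) \<in> rim (sym_diagram f) \<longleftrightarrow> (i, j) \<in> sym_diagram f \<and> (i + 1, j + 1) \<notin> sym_diagram f"
    unfolding rim_def by simp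
  also have "\<dots> \<longleftrightarrow> (1 \<le> i \<and> i \<le> j \<and> i = f (j - i)) \<or> (1 \<le> j \<and> j < i \<and> j = f (i - j))"
    unfolding sym_diagram_def by auto
  finally show ?thesis .
qed

lemma rim_sc_diagram_cases:
  assumes "finite M" "x \<in> rim (sc_diagram M)"
  obtains (upper) c where "x = (diag_count M c, diag_count M c + c)" "c < Max M" "0 < diag_count M c"
  | (lower) c where "x = (diag_count M c + c, diag_count M c)" "0 < c" "c < Max M" "0 < diag_count M c"
proof -
  obtain i j where ij: "x = (i, j)" by (cases x)
  have "(i, j) \<in> rim (sym_diagram (diag_count M))" using assms(2) ij unfolding sc_diagram_def by simp
  then consider "1 \<le> i" "i \<le> j" "i = diag_count M (j - i)" | "1 \<le> j" "j < i" "j = diag_count M (i - j)"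
    unfolding rim_sym_diagram by blast
  then show ?thesis
  proof cases
    case 1
    then show ?thesis using upper[of "j - i"] diag_count_pos_iff[OF assms(1), of "j - i"] ij by auto
  next
    case 2
    then show ?thesis using lower[of "i - j"] diag_count_pos_iff[OF assms(1), of "i - j"] ij by auto
  qed
qed

lemma content_rim_sc_diagram:
  assumes "finite M" "M \<noteq> {}"
  shows "content ` rim (sc_diagram M) = {1 - int (Max M) .. int (Max M) - 1}"
proof (intro equalityI subsetI)
  fix t assume "t \<in> content ` rim (sc_diagram M)"
  then obtain x where x: "x \<in> rim (sc_diagram M)" "t = content x" by blast
  from assms(1) x(1) show "t \<in> {1 - int (Max M) .. int (Max M) - 1}"
    by (cases rule: rim_sc_diagram_cases) (use x(2) in \<open>auto simp: content_def\<close>)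
next
  fix t assume t: "t \<in> {1 - int (Max M) .. int (Max M) - 1}"
  define c where "c = nat \<bar>t\<bar>"
  have "c < Max M" using t unfolding c_def by (cases "0 \<le> t") auto
  then have pos: "0 < diag_count M c" using diag_count_pos_iff[OF assms(1)] assms(2) by simp
  show "t \<in> content ` rim (sc_diagram M)"
  proof (cases "0 \<le> t")
    case True
    have "(diag_count M c, diag_count M c + c) \<in> rim (sc_diagram M)"
      unfolding sc_diagram_def rim_sym_diagram using pos by auto
    moreover have "t = content (diag_count M c, diag_count M c + c)"
      unfolding content_def c_def using True by simp
    ultimately show ?thesis by blast
  next
    case False
    have "(diag_count M c + c, diag_count M c) \<in> rim (sc_diagram M)"
      unfolding sc_diagram_def rim_sym_diagram using pos False unfolding c_def by auto
    moreover have "t = content (diag_count M c + c, diag_count M c)"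
      unfolding content_def c_def using False by simp
    ultimately show ?thesis by blast
  qed
qed

text \<open>Along the rim path of \<open>sc_diagram M\<close> the content drops by one at each step, from
  \<open>Max M - 1\<close> at the first node to \<open>1 - Max M\<close> at the last.\<close>

lemma rim_label_sc_diagram:
  assumes "finite M" "M \<noteq> {}" "x \<in> rim (sc_diagram M)"
  shows "int (rim_label (sc_diagram M) x) = int (Max M) - content x"
proof -
  let ?D = "sc_diagram M" and ?n = "int (Max M)"
  have young: "young ?D" using young_sc_diagram[OF assms(1)] .
  have cx: "content x \<in> {1 - ?n .. ?n - 1}" using content_rim_sc_diagram[OF assms(1,2)] assms(3) by blast
  have "card {z\<in>rim ?D. content x < content z} = card (content ` {z\<in>rim ?D. content x < content z})"
    using inj_on_content_rim[OF young] by (intro card_image[symmetric]) (auto intro: inj_on_subset)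
  also have "content ` {z\<in>rim ?D. content x < content z} = {t \<in> content ` rim ?D. content x < t}" by auto
  also have "\<dots> = {content x + 1 .. ?n - 1}" unfolding content_rim_sc_diagram[OF assms(1,2)] using cx by auto
  finally show ?thesis using rim_label_content[OF young assms(3)] cx by simp
qed

lemma upper_rim_node:
  assumes "finite M" "M \<noteq> {}" "c < Max M"
  shows "(diag_count M c, diag_count M c + c) \<in> rim (sc_diagram M)"
    and "rim_label (sc_diagram M) (diag_count M c, diag_count M c + c) = Max M - c"
proof -
  have "0 < diag_count M c" using diag_count_pos_iff[OF assms(1)] assms(2,3) by simp
  then show r: "(diag_count M c, diag_count M c + c) \<in> rim (sc_diagram M)"
    unfolding sc_diagram_def rim_sym_diagram by simp
  show "rim_label (sc_diagram M) (diag_count M c, diag_count M c + c) = Max M - c"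
    using rim_label_sc_diagram[OF assms(1,2) r] assms(3) unfolding content_def by simp
qed

lemma lower_rim_node_label:
  assumes "finite M" "M \<noteq> {}" "0 < c" "c < Max M"
  shows "rim_label (sc_diagram M) (diag_count M c + c, diag_count M c) = Max M + c"
proof -
  have "0 < diag_count M c" using diag_count_pos_iff[OF assms(1)] assms(2,4) by simp
  then have "(diag_count M c + c, diag_count M c) \<in> rim (sc_diagram M)"
    unfolding sc_diagram_def rim_sym_diagram using assms(3) by simp
  then show ?thesis using rim_label_sc_diagram[OF assms(1,2)] unfolding content_def by fastforce
qed

lemma rim_label_le_Max_upper:
  assumes "finite M" "M \<noteq> {}" "x \<in> rim (sc_diagram M)" "rim_label (sc_diagram M) x \<le> Max M"
  obtains c where "x = (diag_count M c, diag_count M c + c)" "c < Max M"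
    "rim_label (sc_diagram M) x = Max M - c"
  using assms(1,3)
proof (cases rule: rim_sc_diagram_cases)
  case (upper c)
  then show ?thesis using that upper_rim_node(2)[OF assms(1,2) upper(2)] by simp
next
  case (lower c)
  then show ?thesis using lower_rim_node_label[OF assms(1,2) lower(2,3)] assms(4) by simp
qed

lemma rim_label_image_sc_diagram:
  assumes "finite M" "M \<noteq> {}"
  shows "rim_label (sc_diagram M) ` rim (sc_diagram M) = {1 .. 2 * Max M - 1}"
proof (intro equalityI subsetI)
  fix l assume "l \<in> rim_label (sc_diagram M) ` rim (sc_diagram M)"
  then obtain x where x: "x \<in> rim (sc_diagram M)" "l = rim_label (sc_diagram M) x" by blast
  have "content x \<in> {1 - int (Max M) .. int (Max M) - 1}" using content_rim_sc_diagram[OF assms] x(1) by blast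
  then have "1 \<le> int l" "int l \<le> 2 * int (Max M) - 1" using rim_label_sc_diagram[OF assms x(1)] x(2) by auto
  then show "l \<in> {1 .. 2 * Max M - 1}" unfolding atLeastAtMost_iff by linarith
next
  fix l assume "l \<in> {1 .. 2 * Max M - 1}"
  then have "int (Max M) - int l \<in> content ` rim (sc_diagram M)" unfolding content_rim_sc_diagram[OF assms] by auto
  then obtain x where x: "x \<in> rim (sc_diagram M)" "content x = int (Max M) - int l" by auto
  then have "rim_label (sc_diagram M) x = l" using rim_label_sc_diagram[OF assms x(1)] by simp
  then show "l \<in> rim_label (sc_diagram M) ` rim (sc_diagram M)" using x(1) by blast
qed

section \<open>The \<open>p\<close>-rim of a self-conjugate diagram\<close>

lemma sc_diagram_le_Max:
  assumes "finite M" "(i, j) \<in> sc_diagram M"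
  shows "i \<le> Max M" "j \<le> Max M"
proof -
  let ?d = "max i j - min i j"
  have "min i j \<le> diag_count M ?d" "1 \<le> min i j"
    using assms(2) unfolding sc_diagram_def mem_sym_diagram_min_max by auto
  moreover have "diag_count M ?d \<le> Max M - ?d" using diag_count_le_Max_diff[OF assms(1)] .
  ultimately have "max i j \<le> Max M" by linarith
  then show "i \<le> Max M" "j \<le> Max M" by simp_all
qed

lemma first_column_sc_diagram:
  assumes "finite M" "M \<noteq> {}" "1 \<le> i" "i \<le> Max M"
  shows "(i, 1) \<in> sc_diagram M"
proof -
  have "0 < diag_count M (i - 1)" using diag_count_pos_iff[OF assms(1), of "i - 1"] assms(2-4) by simp
  then show ?thesis using assms(3) unfolding sc_diagram_def mem_sym_diagram_min_max by auto
qed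

lemma num_rows_sc_diagram:
  assumes "finite M" "M \<noteq> {}"
  shows "num_rows (sc_diagram M) = Max M"
proof -
  have "{i. \<exists>j. (i, j) \<in> sc_diagram M} = {1..Max M}"
  proof (intro equalityI subsetI)
    fix i assume "i \<in> {i. \<exists>j. (i, j) \<in> sc_diagram M}"
    then obtain j where ij: "(i, j) \<in> sc_diagram M" by blast
    have "1 \<le> i" using young_pos[OF young_sc_diagram[OF assms(1)] ij] by simp
    then show "i \<in> {1..Max M}" using sc_diagram_le_Max(1)[OF assms(1) ij] unfolding atLeastAtMost_iff by (rule conjI)
  next
    fix i assume "i \<in> {1..Max M}"
    then have "(i, 1) \<in> sc_diagram M" using first_column_sc_diagram[OF assms] by simp
    then show "i \<in> {i. \<exists>j. (i, j) \<in> sc_diagram M}" by blast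
  qed
  then show ?thesis unfolding num_rows_def by simp
qed

lemma row_has_rim:
  assumes "young D" "(r, j) \<in> D"
  shows "\<exists>j'. (r, j') \<in> rim D"
proof -
  let ?J = "{j. (r, j) \<in> D}"
  have "?J \<subseteq> snd ` D" by force
  then have finJ: "finite ?J" using young_finite[OF assms(1)] finite_subset by blast
  have "?J \<noteq> {}" using assms(2) by blast
  then have "Max ?J \<in> ?J" using finJ by (rule Max_in[rotated])
  then have m: "(r, Max ?J) \<in> D" by (simp only: mem_Collect_eq)
  have "(r + 1, Max ?J + 1) \<notin> D"
  proof
    assume "(r + 1, Max ?J + 1) \<in> D"
    moreover have "1 \<le> r" using young_pos[OF assms] by simp
    ultimately have "(r, Max ?J + 1) \<in> D" using young_downward[OF assms(1), of "r + 1" "Max ?J + 1" r] by simp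
    then have "Max ?J + 1 \<le> Max ?J" using Max_ge[OF finJ] by (simp only: mem_Collect_eq)
    then show False by simp
  qed
  then show ?thesis using m unfolding rim_def by blast
qed

lemma rim_label_less_of_row_less:
  assumes "finite M" "M \<noteq> {}" "x \<in> rim (sc_diagram M)" "y \<in> rim (sc_diagram M)" "fst x < fst y"
  shows "rim_label (sc_diagram M) x < rim_label (sc_diagram M) y"
  using rim_content_order[OF young_sc_diagram[OF assms(1)] assms(4,3,5)]
    rim_label_sc_diagram[OF assms(1,2,3)] rim_label_sc_diagram[OF assms(1,2,4)] by simp

text \<open>Row \<open>diag_count M Y + 1\<close> of \<open>sc_diagram M\<close> is the row with diagonal hook \<open>2 * Y - 1\<close>;
  its last node has content \<open>Y - 1\<close>.\<close>

lemma row_start_label: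
  assumes "finite M" "0 \<notin> M" "Y \<in> M"
  shows "{y\<in>rim (sc_diagram M). fst y = diag_count M Y + 1} \<noteq> {}"
    and "Min (rim_label (sc_diagram M) ` {y\<in>rim (sc_diagram M). fst y = diag_count M Y + 1}) = Max M + 1 - Y"
proof -
  let ?f = "diag_count M" and ?D = "sc_diagram M"
  let ?R = "{y\<in>rim ?D. fst y = ?f Y + 1}"
  have ne: "M \<noteq> {}" and Y: "0 < Y" "Y \<le> Max M" using assms by (auto intro: gr0I)
  have fY: "?f (Y - 1) = ?f Y + 1" using diag_count_Suc[OF assms(1), of "Y - 1"] assms(3) Y(1) by simp
  note y0 = upper_rim_node[OF assms(1) ne, of "Y - 1"]
  have y0R: "(?f (Y - 1), ?f (Y - 1) + (Y - 1)) \<in> ?R" using y0(1) Y fY by simp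
  then show "?R \<noteq> {}" by blast
  have "?R \<subseteq> ?D" unfolding rim_def by auto
  then have finR: "finite ?R" using young_finite[OF young_sc_diagram[OF assms(1)]] finite_subset by blast
  have "Max M + 1 - Y \<le> rim_label ?D y" if y: "y \<in> ?R" for y
  proof -
    have "y \<in> rim ?D" "fst y = ?f Y + 1" using y by auto
    from assms(1) this(1) show ?thesis
    proof (cases rule: rim_sc_diagram_cases)
      case (upper c)
      have "\<not> Y \<le> c"
      proof
        assume "Y \<le> c"
        then have "?f c \<le> ?f Y" by (rule diag_count_antimono[OF assms(1)])
        then show False using upper(1) \<open>fst y = _\<close> by simp
      qed
      then have "c < Y" by simp
      then show ?thesis using upper upper_rim_node(2)[OF assms(1) ne upper(2)] by simp
    next
      case (lower c)
      then show ?thesis using lower_rim_node_label[OF assms(1) ne lower(2,3)] Y by simp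
    qed
  qed
  moreover have "rim_label ?D (?f (Y - 1), ?f (Y - 1) + (Y - 1)) = Max M + 1 - Y" using y0(2) Y by simp
  ultimately show "Min (rim_label ?D ` ?R) = Max M + 1 - Y"
    using y0R finR by (intro antisym Min_le Min.boundedI) (auto simp: image_iff)
qed

lemma row_below_upper_node_has_below:
  assumes "finite M" "M \<noteq> {}" "y \<in> rim (sc_diagram M)" "rim_label (sc_diagram M) y \<le> Max M"
    and "fst y = diag_count M c + 1"
  shows "\<exists>Y\<in>M. Y \<le> c"
proof -
  obtain c0 where c0: "y = (diag_count M c0, diag_count M c0 + c0)"
    using rim_label_le_Max_upper[OF assms(1-4)] by metis
  then have f: "diag_count M c0 = diag_count M c + 1" using assms(5) by simp
  have "\<not> c \<le> c0"
  proof
    assume "c \<le> c0"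
    then have "diag_count M c0 \<le> diag_count M c" by (rule diag_count_antimono[OF assms(1)])
    then show False using f by simp
  qed
  then have "c0 < c" by simp
  then have "{y\<in>M. c < y} \<subseteq> {y\<in>M. c0 < y}" by auto
  moreover have "{y\<in>M. c < y} \<noteq> {y\<in>M. c0 < y}"
  proof
    assume "{y\<in>M. c < y} = {y\<in>M. c0 < y}"
    then have "diag_count M c = diag_count M c0" unfolding diag_count_def by simp
    then show False using f by simp
  qed
  ultimately obtain Y where "Y \<in> M" "c0 < Y" "\<not> c < Y" by blast
  then show ?thesis by (auto simp: not_less)
qed

lemma pseg_max_label:
  assumes "finite M" "M \<noteq> {}" "x \<in> pseg (sc_diagram M) p s"
    and "\<forall>y\<in>pseg (sc_diagram M) p s. rim_label (sc_diagram M) y \<le> rim_label (sc_diagram M) x"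
    and "rim_label (sc_diagram M) x < 2 * Max M - 1"
  shows "rim_label (sc_diagram M) x = s + p - 1"
proof (rule ccontr)
  let ?l = "rim_label (sc_diagram M)"
  have x: "x \<in> rim (sc_diagram M)" "s \<le> ?l x" "?l x \<le> s + p - 1" using assms(3) unfolding pseg_def by auto
  assume "?l x \<noteq> s + p - 1"
  moreover have "?l x + 1 \<in> ?l ` rim (sc_diagram M)"
    unfolding rim_label_image_sc_diagram[OF assms(1,2)] using assms(5) by auto
  ultimately obtain z where "z \<in> pseg (sc_diagram M) p s" "?l z = ?l x + 1" using x unfolding pseg_def by force
  then show False using assms(4) by fastforce
qed

lemma diag_count_next_below:
  assumes "finite M" "has_below p M X"
  shows "diag_count M (next_below p M X) = diag_count M (X - p)"
proof -
  have "p \<le> X" using assms(2) unfolding has_below_def by auto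
  then have "{y\<in>M. next_below p M X < y} = {y\<in>M. X - p < y}"
    using next_below_add_le[OF assms] le_next_below[OF assms] by force
  then show ?thesis unfolding diag_count_def by simp
qed

lemma card_le_Max: "finite M \<Longrightarrow> 0 \<notin> M \<Longrightarrow> card M \<le> Max M"
proof -
  assume "finite M" "0 \<notin> M"
  then have "M \<subseteq> {1..Max M}" by (auto intro: gr0I simp: Suc_le_eq)
  then show ?thesis by (metis card_atLeastAtMost card_mono diff_Suc_1 finite_atLeastAtMost)
qed

text \<open>For a chain element \<open>X\<close> that has a successor, the \<open>p\<close>-segment starting at label
  \<open>Max M + 1 - X\<close> (content \<open>X - 1\<close>) ends at the upper rim node of content \<open>X - p\<close>, and the next
  \<open>p\<close>-segment starts in the row of the successor \<open>next_below p M X\<close>.\<close>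

lemma chain_segment_end:
  assumes "finite M" "0 \<notin> M" "0 < p" "X \<in> p_chain p M" "has_below p M X"
  defines "x \<equiv> (diag_count M (X - p), diag_count M (X - p) + (X - p))"
  shows "x \<in> pseg (sc_diagram M) p (Max M + 1 - X)"
    and "\<forall>y\<in>pseg (sc_diagram M) p (Max M + 1 - X). rim_label (sc_diagram M) y \<le> rim_label (sc_diagram M) x"
    and "fst x \<noteq> num_rows (sc_diagram M)"
    and "Min (rim_label (sc_diagram M) ` {y\<in>rim (sc_diagram M). fst y = fst x + 1})
           = Max M + 1 - next_below p M X"
proof -
  let ?D = "sc_diagram M" and ?f = "diag_count M" and ?Y = "next_below p M X"
  have ne: "M \<noteq> {}" using assms(4) p_chain_empty_iff by blast
  have X: "X \<le> Max M" "p < X" using p_chain_le_Max[OF assms(1,4)] has_below_gt[OF assms(2,5)] by auto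
  then have lx: "rim_label ?D x = (Max M + 1 - X) + p - 1"
    using upper_rim_node(2)[OF assms(1) ne, of "X - p"] assms(3) unfolding x_def by simp
  show "x \<in> pseg ?D p (Max M + 1 - X)"
    using upper_rim_node(1)[OF assms(1) ne, of "X - p"] X lx assms(3) unfolding x_def pseg_def by simp
  show "\<forall>y\<in>pseg ?D p (Max M + 1 - X). rim_label ?D y \<le> rim_label ?D x"
    unfolding pseg_def lx by simp
  have Y: "?Y \<in> M" using next_below_in[OF assms(1,5)] .
  moreover have "?Y \<le> X - p" using next_below_add_le[OF assms(1,5)] by linarith
  ultimately have "?Y \<in> M - {y\<in>M. X - p < y}" by (simp add: not_less)
  then have "{y\<in>M. X - p < y} \<subset> M" by blast
  then have "?f (X - p) < card M" unfolding diag_count_def using assms(1) by (intro psubset_card_mono)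
  then show "fst x \<noteq> num_rows ?D"
    using num_rows_sc_diagram[OF assms(1) ne] card_le_Max[OF assms(1,2)] unfolding x_def by simp
  show "Min (rim_label ?D ` {y\<in>rim ?D. fst y = fst x + 1}) = Max M + 1 - ?Y"
    using row_start_label(2)[OF assms(1,2) Y(1)] diag_count_next_below[OF assms(1,5)] unfolding x_def by simp
qed

lemma pseg_start_p_chain:
  assumes "finite M" "0 \<notin> M" "0 < p" "X \<in> p_chain p M"
  shows "pseg_start (sc_diagram M) p (Max M + 1 - X)"
proof -
  have ne: "M \<noteq> {}" using assms(4) p_chain_empty_iff by blast
  have "pseg_start (sc_diagram M) p (Max M + 1 - (next_below p M ^^ j) (Max M))" for j
  proof (induction j)
    case 0
    then show ?case using pseg_start.first by simp
  next
    case (Suc j)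
    let ?X = "(next_below p M ^^ j) (Max M)"
    have X: "?X \<in> p_chain p M" unfolding p_chain_def using ne by simp
    show ?case
    proof (cases "has_below p M ?X")
      case True
      note e = chain_segment_end[OF assms(1-3) X True]
      show ?thesis using pseg_start.step[OF Suc.IH e(1,2,3)] e(4) by simp
    next
      case False
      then have "next_below p M ?X = ?X" by (simp add: next_below_def)
      then show ?thesis using Suc.IH by simp
    qed
  qed
  then show ?thesis using assms(4) ne unfolding p_chain_def by auto
qed

lemma next_row_start_node:
  assumes "finite M" "M \<noteq> {}" "x \<in> rim (sc_diagram M)" "fst x \<noteq> num_rows (sc_diagram M)"
  obtains y0 where "y0 \<in> rim (sc_diagram M)" "fst y0 = fst x + 1"
    "rim_label (sc_diagram M) y0 = Min (rim_label (sc_diagram M) ` {y\<in>rim (sc_diagram M). fst y = fst x + 1})"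
    "rim_label (sc_diagram M) x < rim_label (sc_diagram M) y0"
proof -
  let ?D = "sc_diagram M"
  let ?R = "{y\<in>rim ?D. fst y = fst x + 1}"
  have "x \<in> ?D" using assms(3) unfolding rim_def by auto
  then have "fst x + 1 \<le> Max M"
    using sc_diagram_le_Max(1)[OF assms(1), of "fst x" "snd x"] assms(4) num_rows_sc_diagram[OF assms(1,2)]
    by simp
  then have "(fst x + 1, 1) \<in> ?D" using first_column_sc_diagram[OF assms(1,2)] by simp
  then obtain j where "(fst x + 1, j) \<in> rim ?D" using row_has_rim[OF young_sc_diagram[OF assms(1)]] by blast
  then have neR: "?R \<noteq> {}" by force
  have "?R \<subseteq> ?D" unfolding rim_def by auto
  then have finR: "finite ?R" using young_finite[OF young_sc_diagram[OF assms(1)]] finite_subset by blast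
  have "Min (rim_label ?D ` ?R) \<in> rim_label ?D ` ?R" using finR neR by (intro Min_in) auto
  then obtain y0 where l0: "Min (rim_label ?D ` ?R) = rim_label ?D y0" and "y0 \<in> ?R" by (rule imageE)
  then have y0: "y0 \<in> rim ?D" "fst y0 = fst x + 1" by auto
  moreover have "rim_label ?D x < rim_label ?D y0"
    using rim_label_less_of_row_less[OF assms(1,2,3) y0(1)] y0(2) by simp
  ultimately show ?thesis using that l0 by simp
qed

lemma p_chain_of_pseg_start:
  assumes fin: "finite M" and ne: "M \<noteq> {}" and zero: "0 \<notin> M" and p: "0 < p"
    and "pseg_start (sc_diagram M) p s" "s \<le> Max M"
  shows "\<exists>X\<in>p_chain p M. s = Max M + 1 - X"
  using assms(5,6)
proof (induction rule: pseg_start.induct)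
  case first
  then show ?case using Max_in_p_chain[OF ne] by force
next
  case (step s x)
  let ?D = "sc_diagram M" and ?n = "Max M" and ?f = "diag_count M"
  let ?s' = "Min (rim_label ?D ` {y\<in>rim ?D. fst y = fst x + 1})"
  have x: "x \<in> rim ?D" "s \<le> rim_label ?D x" "rim_label ?D x \<le> s + p - 1"
    using step.hyps(2) unfolding pseg_def by auto
  obtain y0 where y0: "y0 \<in> rim ?D" "fst y0 = fst x + 1" "rim_label ?D y0 = ?s'"
    "rim_label ?D x < rim_label ?D y0"
    by (rule next_row_start_node[OF fin ne x(1) step.hyps(4)])
  then have lx_n: "rim_label ?D x < ?n" using step.prems by simp
  then obtain X where X: "X \<in> p_chain p M" "s = ?n + 1 - X" using step.IH x(2) by fastforce
  have lx: "rim_label ?D x = s + p - 1" using pseg_max_label[OF fin ne step.hyps(2,3)] lx_n by simp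
  obtain c where c: "x = (?f c, ?f c + c)" "c < ?n" "rim_label ?D x = ?n - c"
    by (rule rim_label_le_Max_upper[OF fin ne x(1) less_imp_le[OF lx_n]])
  have "X \<le> ?n" using p_chain_le_Max[OF fin X(1)] .
  then have Xc: "c = X - p" "p < X" using lx c(2,3) X(2) lx_n p by linarith+
  have "\<exists>Y\<in>M. Y \<le> c"
    using row_below_upper_node_has_below[OF fin ne y0(1)] step.prems y0(2,3) c(1) by simp
  then obtain Y where "Y \<in> M" "Y \<le> c" by blast
  then have hb: "has_below p M X" using Xc unfolding has_below_def by (intro bexI[of _ Y]) auto
  have "?s' = ?n + 1 - next_below p M X"
    using chain_segment_end(4)[OF fin zero p X(1) hb] c(1) Xc by simp
  then show ?case using next_below_in_p_chain[OF X(1)] by blast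
qed

lemma U_star_sc_diagram:
  assumes "finite M" "0 \<notin> M" "0 < p"
  shows "U_star (sc_diagram M) p = (\<lambda>c. (diag_count M c, diag_count M c + c)) ` chain_cover p M"
proof (cases "M = {}")
  case True
  have "rim (sc_diagram M) = {}" unfolding True rim_def sc_diagram_def sym_diagram_def diag_count_def by simp
  then show ?thesis using True unfolding U_star_def prim_def pseg_def chain_cover_def p_chain_def by simp
next
  case False
  let ?D = "sc_diagram M" and ?f = "diag_count M" and ?n = "Max M"
  show ?thesis
  proof (intro equalityI subsetI)
    fix x assume "x \<in> U_star ?D p"
    then obtain s where s: "pseg_start ?D p s" "x \<in> pseg ?D p s" and "fst x \<le> snd x"
      unfolding U_star_def prim_def by auto
    then have x: "x \<in> rim ?D" "s \<le> rim_label ?D x" "rim_label ?D x \<le> s + p - 1" unfolding pseg_def by auto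
    from assms(1) x(1) obtain c where c: "x = (?f c, ?f c + c)" "c < ?n"
    proof (cases rule: rim_sc_diagram_cases)
      case (lower c)
      then show ?thesis using \<open>fst x \<le> snd x\<close> by simp
    qed
    have l: "rim_label ?D x = ?n - c" using upper_rim_node(2)[OF assms(1) False c(2)] c(1) by simp
    obtain X where X: "X \<in> p_chain p M" "s = ?n + 1 - X"
      using p_chain_of_pseg_start[OF assms(1) False assms(2,3) s(1)] x(2) l by fastforce
    have "X \<le> ?n" using p_chain_le_Max[OF assms(1) X(1)] .
    then have "c < X" "X \<le> c + p" using x(2,3) l X(2) c(2) assms(3) by linarith+
    then have "c \<in> chain_cover p M" unfolding chain_cover_def using X(1) by blast
    then show "x \<in> (\<lambda>c. (?f c, ?f c + c)) ` chain_cover p M" using c(1) by blast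
  next
    fix x assume "x \<in> (\<lambda>c. (?f c, ?f c + c)) ` chain_cover p M"
    then obtain c X where c: "x = (?f c, ?f c + c)" "X \<in> p_chain p M" "c < X" "X \<le> c + p"
      unfolding chain_cover_def by blast
    have "X \<le> ?n" using p_chain_le_Max[OF assms(1) c(2)] .
    then have cn: "c < ?n" using c(3) by simp
    have "x \<in> rim ?D" "rim_label ?D x = ?n - c" using upper_rim_node[OF assms(1) False cn] c(1) by auto
    then have "x \<in> pseg ?D p (?n + 1 - X)" unfolding pseg_def using c(3,4) \<open>X \<le> ?n\<close> cn assms(3) by auto
    then have "x \<in> prim ?D p" unfolding prim_def using pseg_start_p_chain[OF assms c(2)] by blast
    then show "x \<in> U_star ?D p" unfolding U_star_def using c(1) by auto
  qed
qed

lemma r_star_sc_diagram: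
  assumes "finite M" "0 \<notin> M" "0 < p"
  shows "r_star (sc_diagram M) p = card (chain_cover p M)"
proof -
  have "inj_on (\<lambda>c. (diag_count M c, diag_count M c + c)) (chain_cover p M)" by (intro inj_onI) auto
  then show ?thesis unfolding r_star_def U_star_sc_diagram[OF assms] by (simp add: card_image)
qed

text \<open>The upper and the lower half of \<open>Rim*\<close> meet only on the diagonal, in the node of
  content \<open>0\<close>; this is the source of the parity \<open>\<epsilon>*\<close>.\<close>

lemma a_star_sc_diagram:
  assumes "finite M" "0 \<notin> M" "0 < p"
  shows "a_star (sc_diagram M) p = 2 * card (chain_cover p M) - (if 0 \<in> chain_cover p M then 1 else 0)"
proof -
  let ?u = "\<lambda>c. (diag_count M c, diag_count M c + c)"
  let ?U = "?u ` chain_cover p M"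
  let ?V = "(\<lambda>(i, j). (j, i)) ` ?U"
  have "rim_star (sc_diagram M) p = ?U \<union> ?V" unfolding rim_star_def U_star_sc_diagram[OF assms] by force
  moreover have "card ?U = card (chain_cover p M)" by (intro card_image inj_onI) auto
  moreover have "card ?V = card ?U" by (intro card_image inj_onI) auto
  moreover have "?U \<inter> ?V = (if 0 \<in> chain_cover p M then {?u 0} else {})"
  proof (intro equalityI subsetI)
    fix x assume "x \<in> ?U \<inter> ?V"
    then obtain c c' where "c \<in> chain_cover p M" "x = ?u c" "x = (diag_count M c' + c', diag_count M c')"
      by force
    then show "x \<in> (if 0 \<in> chain_cover p M then {?u 0} else {})" by auto
  next
    fix x assume "x \<in> (if 0 \<in> chain_cover p M then {?u 0} else {})"
    then have "0 \<in> chain_cover p M" "x = ?u 0" by (auto split: if_splits)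
    then show "x \<in> ?U \<inter> ?V" by force
  qed
  moreover have "card (?U \<union> ?V) + card (?U \<inter> ?V) = card ?U + card ?V"
    using card_Un_Int[of ?U ?V] finite_chain_cover[OF assms(1)] by simp
  ultimately show ?thesis unfolding a_star_def by (auto split: if_splits)
qed

lemma eps_star_sc_diagram:
  assumes "finite M" "0 \<notin> M" "0 < p"
  shows "eps_star (sc_diagram M) p = (if 0 \<in> chain_cover p M then 1 else 0)"
proof (cases "0 \<in> chain_cover p M")
  case True
  then obtain k where "card (chain_cover p M) = Suc k"
    using finite_chain_cover[OF assms(1)] by (metis card_0_eq emptyE not0_implies_Suc)
  then show ?thesis unfolding eps_star_def a_star_sc_diagram[OF assms] using True by simp
qed (simp add: eps_star_def a_star_sc_diagram[OF assms])

lemma diag_count_shift_chain: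
  assumes "finite M"
  shows "diag_count M c = diag_count (shift_chain p M) c + (if c \<in> chain_cover p M then 1 else 0)"
proof -
  let ?C = "p_chain p M"
  have finC: "finite ?C" using finite_p_chain[OF assms] .
  have A: "{y\<in>shift_chain p M. c < y} = {y\<in>M - ?C. c < y} \<union> (\<lambda>X. X - p) ` {X\<in>?C. c + p < X}"
    unfolding shift_chain_def shift_down_def by force
  have "X - p \<notin> M - ?C" if "X \<in> ?C" "c + p < X" for X
    using diff_in_p_chain[OF assms that(1)] that by auto
  then have disjA: "{y\<in>M - ?C. c < y} \<inter> (\<lambda>X. X - p) ` {X\<in>?C. c + p < X} = {}" by auto
  have injA: "inj_on (\<lambda>X. X - p) {X\<in>?C. c + p < X}" by (intro inj_onI) auto
  have cardA: "card {y\<in>shift_chain p M. c < y} = card {y\<in>M - ?C. c < y} + card {X\<in>?C. c + p < X}"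
    unfolding A using disjA injA assms finC by (subst card_Un_disjoint) (auto simp: card_image)
  have B: "{y\<in>M. c < y} = {y\<in>M - ?C. c < y} \<union> ({X\<in>?C. c + p < X} \<union> {X\<in>?C. c < X \<and> X \<le> c + p})"
    using p_chain_subset[OF assms] by auto
  have cardB: "card {y\<in>M. c < y} =
      card {y\<in>M - ?C. c < y} + (card {X\<in>?C. c + p < X} + card {X\<in>?C. c < X \<and> X \<le> c + p})"
    unfolding B using assms finC by (subst card_Un_disjoint, simp, simp, force) (subst card_Un_disjoint, auto)
  have "card {X\<in>?C. c < X \<and> X \<le> c + p} = (if c \<in> chain_cover p M then 1 else 0)"
  proof (cases "c \<in> chain_cover p M")
    case True
    then obtain X0 where X0: "X0 \<in> ?C" "c < X0" "X0 \<le> c + p" unfolding chain_cover_def by blast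
    then have "{X\<in>?C. c < X \<and> X \<le> c + p} = {X0}" using p_chain_unique_in_window[OF assms _ X0(1)] by blast
    then show ?thesis using True by simp
  next
    case False
    then have "{X\<in>?C. c < X \<and> X \<le> c + p} = {}" unfolding chain_cover_def by blast
    then show ?thesis using False by simp
  qed
  then show ?thesis unfolding diag_count_def using cardA cardB by simp
qed

lemma lam1_star_sc_diagram:
  assumes "finite M" "0 \<notin> M" "0 < p"
  shows "lam1_star (sc_diagram M) p = sc_diagram (shift_chain p M)"
proof -
  let ?f = "diag_count M" and ?g = "diag_count (shift_chain p M)"
  have g: "?g c = ?f c - (if c \<in> chain_cover p M then 1 else 0)" for c
    using diag_count_shift_chain[OF assms(1), of c p] by simp
  have star: "(i, j) \<in> rim_star (sc_diagram M) p \<longleftrightarrow>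
      min i j = ?f (max i j - min i j) \<and> max i j - min i j \<in> chain_cover p M" for i j
    unfolding rim_star_def U_star_sc_diagram[OF assms] by (cases "i \<le> j") force+
  have mem: "(i, j) \<in> sc_diagram N \<longleftrightarrow> 1 \<le> min i j \<and> min i j \<le> diag_count N (max i j - min i j)" for N i j
    unfolding sc_diagram_def mem_sym_diagram_min_max ..
  have "(i, j) \<in> sc_diagram M - rim_star (sc_diagram M) p \<longleftrightarrow> (i, j) \<in> sc_diagram (shift_chain p M)" for i j
    unfolding Diff_iff mem star g by (auto split: if_splits) linarith
  then show ?thesis unfolding lam1_star_def by auto
qed

section \<open>Diagonal hooks\<close>

text \<open>For \<open>1 \<le> i \<le> card M\<close>, \<open>half_hook M i\<close> is the \<open>i\<close>-th largest element of \<open>M\<close>, and the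
  diagonal hook length \<open>h\<^sub>i\<^sub>i\<close> of \<open>sc_diagram M\<close> is \<open>2 * half_hook M i - 1\<close>.\<close>

definition half_hook :: "nat set \<Rightarrow> nat \<Rightarrow> nat" where
  "half_hook M i = card {c. i \<le> diag_count M c}"

lemma down_closed_eq_lessThan_card:
  fixes S :: "nat set"
  assumes "finite S" "\<And>c c'. c \<in> S \<Longrightarrow> c' \<le> c \<Longrightarrow> c' \<in> S"
  shows "S = {..<card S}"
proof (cases "S = {}")
  case False
  define m where "m = Max S"
  have "S \<subseteq> {..m}" using assms(1) unfolding m_def by auto
  moreover have "{..m} \<subseteq> S" using assms(2)[OF Max_in[OF assms(1) False]] unfolding m_def by auto
  ultimately have S: "S = {..m}" by blast
  then have "card S = Suc m" by simp
  then show ?thesis unfolding S by (simp add: lessThan_Suc_atMost)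
qed simp

lemma half_hook_set:
  assumes "finite M" "1 \<le> i"
  shows "{c. i \<le> diag_count M c} = {..<half_hook M i}"
proof -
  have vanish: "diag_count M c = 0" if "Max (insert 0 M) \<le> c" for c
    using assms(1) that unfolding diag_count_def by (fastforce simp: card_eq_0_iff)
  have "c \<le> Max (insert 0 M)" if "i \<le> diag_count M c" for c
  proof (rule ccontr)
    assume "\<not> c \<le> Max (insert 0 M)"
    then have "diag_count M c = 0" using vanish by simp
    then show False using that assms(2) by simp
  qed
  then have "{c. i \<le> diag_count M c} \<subseteq> {..Max (insert 0 M)}" by auto
  then have "finite {c. i \<le> diag_count M c}" by (rule finite_subset) simp
  then show ?thesis unfolding half_hook_def
    by (rule down_closed_eq_lessThan_card) (use diag_count_antimono[OF assms(1)] in fastforce)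
qed

lemma half_hook_in:
  assumes "finite M" "1 \<le> i" "i \<le> diag_count M 0"
  shows "half_hook M i \<in> M"
proof -
  let ?h = "half_hook M i"
  note S = half_hook_set[OF assms(1,2)]
  have "0 \<in> {c. i \<le> diag_count M c}" using assms(3) by simp
  then have h1: "1 \<le> ?h" using S by auto
  have "?h - 1 \<in> {c. i \<le> diag_count M c}" "?h \<notin> {c. i \<le> diag_count M c}" using S h1 by auto
  then have "diag_count M ?h < diag_count M (?h - 1)" by simp
  then show ?thesis using diag_count_Suc[OF assms(1), of "?h - 1"] h1 by (simp split: if_splits)
qed

lemma half_hook_surj:
  assumes "finite M" "0 \<notin> M" "y \<in> M"
  defines "i \<equiv> diag_count M (y - 1)"
  shows "1 \<le> i" "i \<le> diag_count M 0" "half_hook M i = y"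
proof -
  have y1: "1 \<le> y" using assms(2,3) by (metis less_one not_le)
  have fy: "i = diag_count M y + 1" using diag_count_Suc[OF assms(1), of "y - 1"] assms(3) y1 unfolding i_def by simp
  show "1 \<le> i" using fy by simp
  show "i \<le> diag_count M 0" unfolding i_def using diag_count_antimono[OF assms(1)] by simp
  have "{c. i \<le> diag_count M c} = {..<y}"
  proof (intro equalityI subsetI)
    fix c assume c: "c \<in> {c. i \<le> diag_count M c}"
    show "c \<in> {..<y}"
    proof (rule ccontr)
      assume "c \<notin> {..<y}"
      then have "diag_count M c \<le> diag_count M y" using diag_count_antimono[OF assms(1)] by simp
      then show False using c fy by simp
    qed
  next
    fix c assume "c \<in> {..<y}"
    then show "c \<in> {c. i \<le> diag_count M c}" unfolding i_def using diag_count_antimono[OF assms(1)] by simp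
  qed
  then show "half_hook M i = y" unfolding half_hook_def by simp
qed

lemma row_sc_diagram:
  assumes "finite M" "1 \<le> i" "i \<le> diag_count M 0"
  shows "{j. (i, j) \<in> sc_diagram M} = {1..<i + half_hook M i}"
proof -
  have row: "(i, j) \<in> sc_diagram M \<longleftrightarrow> 1 \<le> j \<and> j < i + half_hook M i" for j
  proof (cases "i \<le> j")
    case True
    have "(i, i + (j - i)) \<in> sc_diagram M \<longleftrightarrow> j - i \<in> {c. i \<le> diag_count M c}"
      unfolding sc_diagram_def mem_sym_diagram_diag using assms(2) by simp
    then show ?thesis unfolding half_hook_set[OF assms(1,2)] using True assms(2) by auto
  next
    case False
    have "diag_count M 0 \<le> diag_count M (0 + (i - j)) + (i - j)" by (rule diag_count_le_add[OF assms(1)])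
    then have "j \<le> diag_count M (i - j)" using assms(3) False by simp
    then show ?thesis using False unfolding sc_diagram_def sym_diagram_def by auto
  qed
  show ?thesis unfolding set_eq_iff mem_Collect_eq atLeastLessThan_iff row by simp
qed

lemma row_len_sc_diagram_less:
  assumes "finite M" "diag_count M 0 < i"
  shows "row_len (sc_diagram M) i < i"
proof -
  have "{j. (i, j) \<in> sc_diagram M} \<subseteq> {1..<i}"
  proof
    fix j assume "j \<in> {j. (i, j) \<in> sc_diagram M}"
    then have j: "1 \<le> min i j" "min i j \<le> diag_count M (max i j - min i j)"
      unfolding sc_diagram_def mem_sym_diagram_min_max by auto
    have "diag_count M (max i j - min i j) \<le> diag_count M 0" using diag_count_antimono[OF assms(1)] by simp
    then show "j \<in> {1..<i}" using j assms(2) by (cases "i \<le> j") auto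
  qed
  then have "row_len (sc_diagram M) i \<le> card {1..<i}" unfolding row_len_def by (intro card_mono) auto
  then show ?thesis using assms(2) by simp
qed

lemma col_len_eq_row_len: "self_conjugate D \<Longrightarrow> col_len D j = row_len D j"
proof -
  assume "self_conjugate D"
  then have "{i. (i, j) \<in> D} = {i. (j, i) \<in> D}" unfolding self_conjugate_def conjugate_def by blast
  then show ?thesis unfolding col_len_def row_len_def by simp
qed

lemma kdiag_sc_diagram:
  assumes "finite M"
  shows "kdiag (sc_diagram M) = diag_count M 0"
proof -
  have "1 \<le> i \<and> i \<le> row_len (sc_diagram M) i \<longleftrightarrow> i \<in> {1..diag_count M 0}" for i
  proof (cases "1 \<le> i \<and> i \<le> diag_count M 0")
    case True
    then have "0 \<in> {c. i \<le> diag_count M c}" by simp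
    then have "0 < half_hook M i" unfolding half_hook_set[OF assms conjunct1[OF True]] by simp
    moreover have "row_len (sc_diagram M) i = i + half_hook M i - 1"
      using row_sc_diagram[OF assms, of i] True unfolding row_len_def by simp
    ultimately show ?thesis using True by simp
  next
    case False
    then show ?thesis using row_len_sc_diagram_less[OF assms, of i] by auto
  qed
  then have "{i. 1 \<le> i \<and> i \<le> row_len (sc_diagram M) i} = {1..diag_count M 0}" by blast
  moreover have "{0} \<union> {1..diag_count M 0} = {..diag_count M 0}" by auto
  moreover have "Max {..diag_count M 0} = diag_count M 0" by (rule Max_eqI) auto
  ultimately show ?thesis unfolding kdiag_def by simp
qed

lemma BG_partition_sc_diagram_iff:
  assumes "finite M" "0 \<notin> M"
  shows "BG_partition p (sc_diagram M) \<longleftrightarrow> (\<forall>y\<in>M. \<not> int p dvd 2 * int y - 1)"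
proof -
  have hook: "hook (sc_diagram M) i i = 2 * int (half_hook M i) - 1" if "1 \<le> i" "i \<le> diag_count M 0" for i
    using row_sc_diagram[OF assms(1) that] that
    unfolding hook_def col_len_eq_row_len[OF self_conjugate_sc_diagram] row_len_def by simp
  show ?thesis
    unfolding BG_partition_def kdiag_sc_diagram[OF assms(1)]
    using self_conjugate_sc_diagram hook half_hook_in[OF assms(1)] half_hook_surj[OF assms] by metis
qed

lemma sc_diagram_conditions_iff_chain_lift:
  assumes "finite N" "0 \<notin> N" "0 < p" "e \<in> {0, 1}"
  shows "(young D \<and> self_conjugate D \<and> a_star D p mod 2 = e \<and>
           [int (r_star D p) - int (eps_star D p) = m] (mod int p) \<and> lam1_star D p = sc_diagram N)
         \<longleftrightarrow> (\<exists>M. chain_lift p N e m M \<and> D = sc_diagram M)"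
proof -
  have iff: "(a_star (sc_diagram M) p mod 2 = e \<and>
        [int (r_star (sc_diagram M) p) - int (eps_star (sc_diagram M) p) = m] (mod int p) \<and>
        lam1_star (sc_diagram M) p = sc_diagram N) \<longleftrightarrow> chain_lift p N e m M"
    if M: "finite M" "0 \<notin> M" for M
  proof -
    have "lam1_star (sc_diagram M) p = sc_diagram N \<longleftrightarrow> shift_chain p M = N"
      using lam1_star_sc_diagram[OF M assms(3)] sc_diagram_inj[OF finite_shift_chain[OF M(1)] assms(1)
          zero_notin_shift_chain[OF M(2)] assms(2)] by auto
    moreover have "a_star (sc_diagram M) p mod 2 = eps_star (sc_diagram M) p" unfolding eps_star_def ..
    ultimately show ?thesis
      unfolding chain_lift_def eps_star_sc_diagram[OF M assms(3)] r_star_sc_diagram[OF M assms(3)]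
      using M assms(4) by auto
  qed
  show ?thesis
  proof
    assume D: "young D \<and> self_conjugate D \<and> a_star D p mod 2 = e \<and>
           [int (r_star D p) - int (eps_star D p) = m] (mod int p) \<and> lam1_star D p = sc_diagram N"
    then obtain M where "finite M" "0 \<notin> M" "D = sc_diagram M" using sc_diagram_surj by blast
    then show "\<exists>M. chain_lift p N e m M \<and> D = sc_diagram M" using iff D by blast
  next
    assume "\<exists>M. chain_lift p N e m M \<and> D = sc_diagram M"
    then obtain M where "chain_lift p N e m M" "D = sc_diagram M" by blast
    then show "young D \<and> self_conjugate D \<and> a_star D p mod 2 = e \<and>
           [int (r_star D p) - int (eps_star D p) = m] (mod int p) \<and> lam1_star D p = sc_diagram N"
      using iff young_sc_diagram self_conjugate_sc_diagram unfolding chain_lift_def by blast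
  qed
qed

lemma BG_partition_chain_lift:
  assumes "0 < p" "finite N" "0 \<notin> N" "chain_lift p N e m M" "BG_partition p (sc_diagram N)"
    and "e = 1 \<Longrightarrow> \<not> int p dvd 2 * m + 1"
  shows "BG_partition p (sc_diagram M)"
proof -
  have M: "finite M" "0 \<notin> M" "shift_chain p M = N" "0 \<in> chain_cover p M \<longleftrightarrow> e = 1"
    "[int (card (chain_cover p M)) - int e = m] (mod int p)" using assms(4) unfolding chain_lift_def by auto
  have "\<not> int p dvd 2 * int (card (chain_cover p M)) - 1" if "0 \<in> chain_cover p M"
  proof -
    have "[2 * (int (card (chain_cover p M)) - 1) + 1 = 2 * m + 1] (mod int p)"
      using M(4,5) that by (intro cong_add cong_mult cong_refl) simp_all
    then have "int p dvd 2 * int (card (chain_cover p M)) - 1 \<longleftrightarrow> int p dvd 2 * m + 1"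
      by (simp add: cong_dvd_iff algebra_simps)
    then show ?thesis using assms(6) M(4) that by simp
  qed
  moreover have "\<forall>y\<in>N. \<not> int p dvd 2 * int y - 1" using assms(5) BG_partition_sc_diagram_iff[OF assms(2,3)] by simp
  ultimately show ?thesis
    using chain_data_hook_condition[OF M(1,2) assms(1)] M(3) BG_partition_sc_diagram_iff[OF M(1,2)] by blast
qed

theorem lemma3p11:
  fixes p \<epsilon> :: nat and m :: int and T :: diagram
  assumes "prime p" and "odd p"
    and "young T" and "self_conjugate T"
    and "\<epsilon> \<in> {0, 1}"
    and "0 \<le> m" and "m < int p"
    and "\<epsilon> = 0 \<Longrightarrow> m = 0"
  shows "(\<exists>!D. young D \<and> self_conjugate D \<and> a_star D p mod 2 = \<epsilon> \<and>
              [int (r_star D p) - int (eps_star D p) = m] (mod int p) \<and>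
              lam1_star D p = T)
         \<and> (BG_partition p T \<and> (\<epsilon> = 1 \<longrightarrow> \<not> int p dvd 2 * m + 1) \<longrightarrow>
              (\<forall>D. young D \<and> self_conjugate D \<and> a_star D p mod 2 = \<epsilon> \<and>
                   [int (r_star D p) - int (eps_star D p) = m] (mod int p) \<and>
                   lam1_star D p = T \<longrightarrow> BG_partition p D))"
proof -
  have p: "0 < p" using assms(1) by (rule prime_gt_0_nat) \<comment> \<open>the only property of \<open>p\<close> that is used\<close>
  obtain N where N: "finite N" "0 \<notin> N" "T = sc_diagram N" using sc_diagram_surj[OF assms(3,4)] by blast
  note lift_iff = sc_diagram_conditions_iff_chain_lift[OF N(1,2) p assms(5), folded N(3)]
  obtain M where M: "chain_lift p N \<epsilon> m M" using chain_lift_exists[OF N(1,2) p assms(5-8)] by blast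
  have "\<exists>!D. \<exists>M. chain_lift p N \<epsilon> m M \<and> D = sc_diagram M"
  proof (rule ex1I)
    show "\<exists>M'. chain_lift p N \<epsilon> m M' \<and> sc_diagram M = sc_diagram M'" using M by blast
    fix D assume "\<exists>M'. chain_lift p N \<epsilon> m M' \<and> D = sc_diagram M'"
    then show "D = sc_diagram M" using chain_lift_unique[OF p _ M] by blast
  qed
  moreover have "BG_partition p (sc_diagram M)"
    if "BG_partition p T" "\<epsilon> = 1 \<longrightarrow> \<not> int p dvd 2 * m + 1" "chain_lift p N \<epsilon> m M" for M
    using BG_partition_chain_lift[OF p N(1,2) that(3)] that(1,2) N(3) by blast
  ultimately show ?thesis unfolding lift_iff by blast
qed

end
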